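(* Assume the setting described in the context, with $(\rho,\sim)$ weakly commutative. Fix a permutation $\pi$ of $F$ and $\hat f\in F\cup\{\varnothing\}$, and let $\mathcal{X}^{\hat f}$ be a valid set of walks each of which contains $\hat f$. Then there exist a set of walks $\mathcal{X}^{\hat f}_\pi$ and a swapping mapping $\Phi^{\hat f}:\mathcal{X}^{\hat f}\to\mathcal{X}^{\hat f}_\pi$ that is a bijection, such that: (a) for every $\tau\in\mathcal{X}^{\hat f}_\pi$ the word $W=\mathrm{REV}[W^{\hat f}_\tau]$ belongs to $\mathrm{Stab}_\pi$, and $R_W=\{\hat f\}$ if $\hat f\in F$; (b) for every word $W$ the set $\{\tau\in\mathcal{X}^{\hat f}_\pi:\mathrm{REV}[W^{\hat f}_\tau]=W\}$ is valid.
   Context: Setting: $\Omega$ is a finite set and $F$ a finite set of flaws, each a nonempty subset of $\Omega$; $F_\sigma=\{f:\sigma\in f\}$. For $\sigma\in\Omega$ and $f\in F_\sigma$ there is a probability distribution $\rho(\cdot\mid f,\sigma)$ with support $A(f,\sigma)$. We write $\sigma\xrightarrow{f}\sigma'$ when $f\in F_\sigma$ and $\sigma'\in A(f,\sigma)$. A walk is a sequence $\sigma_1\xrightarrow{w_1}\sigma_2\cdots\xrightarrow{w_t}\sigma_{t+1}$ of such steps, with word $w_1\ldots w_t$. $\sim$ is a symmetric relation on $F$ (loops allowed), with $\Gamma(f)=\{g:f\sim g\}$, $\Gamma^+(f)=\Gamma(f)\cup\{f\}$ and $\Gamma^+(S)=\bigcup_{f\in S}\Gamma^+(f)$. It is assumed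 that for every step $\sigma\xrightarrow{f}\sigma'$, $F_{\sigma'}\subseteq(F_\sigma\setminus\{f\})\cup\Gamma(f)$. $S\subseteq F$ is independent if $f\not\sim g$ for distinct $f,g\in S$, and $\mathrm{Ind}(F)$ denotes the family of independent sets. Write $f\cong g$ if $f\sim g$ or $f=g$. $(\rho,\sim)$ is weakly commutative if there is an injective map SWAP sending each walk $\sigma_1\xrightarrow{f}\sigma_2\xrightarrow{g}\sigma_3$ with $f\not\sim g$ to a walk $\sigma_1\xrightarrow{g}\sigma_2'\xrightarrow{f}\sigma_3$; fix one. A valid swap replaces a consecutive subwalk $\sigma_1\xrightarrow{f}\sigma_2\xrightarrow{g}\sigma_3$ with $f\not\cong g$ by its SWAP image. A swapping mapping is a map on a set of walks sending each walk to the result of some sequence of valid swaps. A deterministic strategy assigns to each walk whose last state $\sigma$ is flawed a flaw in $F_\sigma$; a walk follows it if each flaw $w_i$ is the one assigned to the prefix ending at $\sigma_i$. A walk $\tau$ is a proper prefix of $\tau'$ if $\tau'$ starts with $\tau$ and $\tau'\ne\tau$. A set of walks is valid if all its walks follow one common deterministic strategy and no walk in it is a proper prefix of another walk in it. Every walk is said to contain $\varnothing$. For a walk $\tau$ containing $f\in F$, $W^f_\tau$ is the longest prefix of the word of $\tau$ that ends with $f$; $W^\varnothing_\tau$ is the whole word of $\tau$. For a word $W=w_1\ldots w_t$, $\mathrm{REV}[W]=w_t\ldots w_1$. A sequence $(I_1,\ldots,I_s)$ with $s\ge1$ is stable if $I_r\in\mathrm{Ind}(F)$ and $I_{r+1}\subseteq\Gamma^+(I_r)$.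 A word $W$ is stable if $W=W_1\ldots W_s$ with nonempty words $W_r$ of distinct flaws whose flaw sets form a stable sequence (this partition is unique). It is $\pi$-stable if in addition each $W_r$ is strictly increasing in the total order induced by $\pi$. $R_W$ is the flaw set of $W_1$, with $R_W=\varnothing$ for the empty word. $\mathrm{Stab}_\pi$ is the set of $\pi$-stable words $W$ such that some walk has word $W$ or $\mathrm{REV}[W]$. *)

theory Defs
  imports Complex_Main
begin

text \<open>States have type 'a; the state space is Omega :: 'a set; a flaw is a subset of Omega,
  so flaws have type 'a set and F :: 'a set set.  A walk
  sigma_1 -w_1-> sigma_2 ... -w_t-> sigma_(t+1) is represented as the pair
  (sigma_1, [(w_1, sigma_2), ..., (w_t, sigma_(t+1))]).\<close>

type_synonym 'a walk = "'a \<times> ('a set \<times> 'a) list"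

definition flaws_at :: "'a set set \<Rightarrow> 'a \<Rightarrow> 'a set set" where
  "flaws_at F \<sigma> = {f \<in> F. \<sigma> \<in> f}"

definition supp :: "'a set \<Rightarrow> ('a set \<Rightarrow> 'a \<Rightarrow> 'a \<Rightarrow> real) \<Rightarrow> 'a set \<Rightarrow> 'a \<Rightarrow> 'a set" where
  "supp \<Omega> \<rho> f \<sigma> = {\<sigma>' \<in> \<Omega>. \<rho> f \<sigma> \<sigma>' > 0}"

definition Gamma :: "'a set set \<Rightarrow> ('a set \<Rightarrow> 'a set \<Rightarrow> bool) \<Rightarrow> 'a set \<Rightarrow> 'a set set" where
  "Gamma F sim f = {g \<in> F. sim f g}"

definition Gamma_plus :: "'a set set \<Rightarrow> ('a set \<Rightarrow> 'a set \<Rightarrow> bool) \<Rightarrow> 'a set set \<Rightarrow> 'a set set" where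
  "Gamma_plus F sim S = (\<Union>f\<in>S. Gamma F sim f \<union> {f})"

definition step :: "'a set \<Rightarrow> 'a set set \<Rightarrow> ('a set \<Rightarrow> 'a \<Rightarrow> 'a \<Rightarrow> real) \<Rightarrow> 'a \<Rightarrow> 'a set \<Rightarrow> 'a \<Rightarrow> bool" where
  "step \<Omega> F \<rho> \<sigma> f \<sigma>' \<longleftrightarrow> f \<in> flaws_at F \<sigma> \<and> \<sigma>' \<in> supp \<Omega> \<rho> f \<sigma>"

fun walk_from :: "'a set \<Rightarrow> 'a set set \<Rightarrow> ('a set \<Rightarrow> 'a \<Rightarrow> 'a \<Rightarrow> real) \<Rightarrow> 'a \<Rightarrow> ('a set \<times> 'a) list \<Rightarrow> bool" where
  "walk_from \<Omega> F \<rho> \<sigma> [] = True"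
| "walk_from \<Omega> F \<rho> \<sigma> ((f, \<sigma>') # rest) = (step \<Omega> F \<rho> \<sigma> f \<sigma>' \<and> walk_from \<Omega> F \<rho> \<sigma>' rest)"

definition is_walk :: "'a set \<Rightarrow> 'a set set \<Rightarrow> ('a set \<Rightarrow> 'a \<Rightarrow> 'a \<Rightarrow> real) \<Rightarrow> 'a walk \<Rightarrow> bool" where
  "is_walk \<Omega> F \<rho> \<tau> \<longleftrightarrow> fst \<tau> \<in> \<Omega> \<and> walk_from \<Omega> F \<rho> (fst \<tau>) (snd \<tau>)"

definition word :: "'a walk \<Rightarrow> 'a set list" where
  "word \<tau> = map fst (snd \<tau>)"

definition last_state :: "'a walk \<Rightarrow> 'a" where
  "last_state \<tau> = last (fst \<tau> # map snd (snd \<tau>))"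

definition setting :: "'a set \<Rightarrow> 'a set set \<Rightarrow> ('a set \<Rightarrow> 'a \<Rightarrow> 'a \<Rightarrow> real) \<Rightarrow> ('a set \<Rightarrow> 'a set \<Rightarrow> bool) \<Rightarrow> bool" where
  "setting \<Omega> F \<rho> sim \<longleftrightarrow>
     finite \<Omega> \<and> finite F \<and> (\<forall>f\<in>F. f \<noteq> {} \<and> f \<subseteq> \<Omega>) \<and>
     (\<forall>\<sigma>\<in>\<Omega>. \<forall>f\<in>flaws_at F \<sigma>.
        (\<forall>\<sigma>'. \<rho> f \<sigma> \<sigma>' \<ge> 0) \<and> (\<forall>\<sigma>'. \<sigma>' \<notin> \<Omega> \<longrightarrow> \<rho> f \<sigma> \<sigma>' = 0) \<and>
        (\<Sum>\<sigma>'\<in>\<Omega>. \<rho> f \<sigma> \<sigma>') = 1) \<and>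
     (\<forall>f g. sim f g \<longrightarrow> sim g f) \<and>
     (\<forall>\<sigma> f \<sigma>'. step \<Omega> F \<rho> \<sigma> f \<sigma>' \<longrightarrow>
        flaws_at F \<sigma>' \<subseteq> (flaws_at F \<sigma> - {f}) \<union> Gamma F sim f)"

text \<open>SWAP witnesses weak commutativity: it is injective on the two-step walks
  sigma1 -f-> sigma2 -g-> sigma3 with f not~ g and maps each to a walk
  sigma1 -g-> sigma2' -f-> sigma3.\<close>
definition swap_map :: "'a set \<Rightarrow> 'a set set \<Rightarrow> ('a set \<Rightarrow> 'a \<Rightarrow> 'a \<Rightarrow> real) \<Rightarrow> ('a set \<Rightarrow> 'a set \<Rightarrow> bool)
    \<Rightarrow> ('a walk \<Rightarrow> 'a walk) \<Rightarrow> bool" where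
  "swap_map \<Omega> F \<rho> sim SWAP \<longleftrightarrow>
     (\<forall>\<sigma>1 f \<sigma>2 g \<sigma>3. step \<Omega> F \<rho> \<sigma>1 f \<sigma>2 \<and> step \<Omega> F \<rho> \<sigma>2 g \<sigma>3 \<and> \<not> sim f g \<longrightarrow>
        (\<exists>\<sigma>2'. SWAP (\<sigma>1, [(f, \<sigma>2), (g, \<sigma>3)]) = (\<sigma>1, [(g, \<sigma>2'), (f, \<sigma>3)]) \<and>
               step \<Omega> F \<rho> \<sigma>1 g \<sigma>2' \<and> step \<Omega> F \<rho> \<sigma>2' f \<sigma>3)) \<and>
     inj_on SWAP {(\<sigma>1, [(f, \<sigma>2), (g, \<sigma>3)]) | \<sigma>1 f \<sigma>2 g \<sigma>3.
                    step \<Omega> F \<rho> \<sigma>1 f \<sigma>2 \<and> step \<Omega> F \<rho> \<sigma>2 g \<sigma>3 \<and> \<not> sim f g}"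

definition valid_swap :: "'a set \<Rightarrow> 'a set set \<Rightarrow> ('a set \<Rightarrow> 'a \<Rightarrow> 'a \<Rightarrow> real) \<Rightarrow> ('a set \<Rightarrow> 'a set \<Rightarrow> bool)
    \<Rightarrow> ('a walk \<Rightarrow> 'a walk) \<Rightarrow> 'a walk \<Rightarrow> 'a walk \<Rightarrow> bool" where
  "valid_swap \<Omega> F \<rho> sim SWAP \<tau> \<tau>' \<longleftrightarrow> is_walk \<Omega> F \<rho> \<tau> \<and>
     (\<exists>\<sigma> pre f \<sigma>2 g \<sigma>3 post.
        \<tau> = (\<sigma>, pre @ [(f, \<sigma>2), (g, \<sigma>3)] @ post) \<and> \<not> sim f g \<and> f \<noteq> g \<and>
        \<tau>' = (\<sigma>, pre @ snd (SWAP (last_state (\<sigma>, pre), [(f, \<sigma>2), (g, \<sigma>3)])) @ post))"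

definition swapping_mapping :: "'a set \<Rightarrow> 'a set set \<Rightarrow> ('a set \<Rightarrow> 'a \<Rightarrow> 'a \<Rightarrow> real) \<Rightarrow> ('a set \<Rightarrow> 'a set \<Rightarrow> bool)
    \<Rightarrow> ('a walk \<Rightarrow> 'a walk) \<Rightarrow> 'a walk set \<Rightarrow> ('a walk \<Rightarrow> 'a walk) \<Rightarrow> bool" where
  "swapping_mapping \<Omega> F \<rho> sim SWAP X \<Phi> \<longleftrightarrow>
     (\<forall>\<tau>\<in>X. (valid_swap \<Omega> F \<rho> sim SWAP)\<^sup>*\<^sup>* \<tau> (\<Phi> \<tau>))"

definition det_strategy :: "'a set \<Rightarrow> 'a set set \<Rightarrow> ('a set \<Rightarrow> 'a \<Rightarrow> 'a \<Rightarrow> real) \<Rightarrow> ('a walk \<Rightarrow> 'a set) \<Rightarrow> bool" where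
  "det_strategy \<Omega> F \<rho> str \<longleftrightarrow>
     (\<forall>\<tau>. is_walk \<Omega> F \<rho> \<tau> \<and> flaws_at F (last_state \<tau>) \<noteq> {} \<longrightarrow> str \<tau> \<in> flaws_at F (last_state \<tau>))"

definition follows :: "('a walk \<Rightarrow> 'a set) \<Rightarrow> 'a walk \<Rightarrow> bool" where
  "follows str \<tau> \<longleftrightarrow> (\<forall>i < length (snd \<tau>). fst (snd \<tau> ! i) = str (fst \<tau>, take i (snd \<tau>)))"

definition proper_prefix :: "'a walk \<Rightarrow> 'a walk \<Rightarrow> bool" where
  "proper_prefix \<tau> \<tau>' \<longleftrightarrow> fst \<tau> = fst \<tau>' \<and> (\<exists>xs. xs \<noteq> [] \<and> snd \<tau>' = snd \<tau> @ xs)"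

definition valid_set :: "'a set \<Rightarrow> 'a set set \<Rightarrow> ('a set \<Rightarrow> 'a \<Rightarrow> 'a \<Rightarrow> real) \<Rightarrow> 'a walk set \<Rightarrow> bool" where
  "valid_set \<Omega> F \<rho> X \<longleftrightarrow> (\<forall>\<tau>\<in>X. is_walk \<Omega> F \<rho> \<tau>) \<and>
     (\<exists>str. det_strategy \<Omega> F \<rho> str \<and> (\<forall>\<tau>\<in>X. follows str \<tau>)) \<and>
     (\<forall>\<tau>\<in>X. \<forall>\<tau>'\<in>X. \<not> proper_prefix \<tau> \<tau>')"

text \<open>None represents the empty flaw symbol.\<close>
definition contains :: "'a set option \<Rightarrow> 'a walk \<Rightarrow> bool" where
  "contains fh \<tau> = (case fh of None \<Rightarrow> True | Some f \<Rightarrow> f \<in> set (word \<tau>))"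

definition W_upto :: "'a set option \<Rightarrow> 'a walk \<Rightarrow> 'a set list" where
  "W_upto fh \<tau> = (case fh of None \<Rightarrow> word \<tau>
     | Some f \<Rightarrow> take (Suc (GREATEST i. i < length (word \<tau>) \<and> word \<tau> ! i = f)) (word \<tau>))"

definition independent :: "'a set set \<Rightarrow> ('a set \<Rightarrow> 'a set \<Rightarrow> bool) \<Rightarrow> 'a set set \<Rightarrow> bool" where
  "independent F sim S \<longleftrightarrow> S \<subseteq> F \<and> (\<forall>f\<in>S. \<forall>g\<in>S. f \<noteq> g \<longrightarrow> \<not> sim f g)"

definition stable_seq :: "'a set set \<Rightarrow> ('a set \<Rightarrow> 'a set \<Rightarrow> bool) \<Rightarrow> 'a set set list \<Rightarrow> bool" where
  "stable_seq F sim Is \<longleftrightarrow> Is \<noteq> [] \<and> (\<forall>I\<in>set Is. independent F sim I) \<and>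
     (\<forall>r. Suc r < length Is \<longrightarrow> Is ! Suc r \<subseteq> Gamma_plus F sim (Is ! r))"

definition stable_partition :: "'a set set \<Rightarrow> ('a set \<Rightarrow> 'a set \<Rightarrow> bool) \<Rightarrow> 'a set list \<Rightarrow> 'a set list list \<Rightarrow> bool" where
  "stable_partition F sim W Ws \<longleftrightarrow> W = concat Ws \<and> (\<forall>b\<in>set Ws. b \<noteq> [] \<and> distinct b) \<and>
     stable_seq F sim (map set Ws)"

text \<open>pi-stable words; the empty word is counted as pi-stable (cf. R_W = {} for it).\<close>
definition pi_stable :: "'a set set \<Rightarrow> ('a set \<Rightarrow> 'a set \<Rightarrow> bool) \<Rightarrow> ('a set \<Rightarrow> nat) \<Rightarrow> 'a set list \<Rightarrow> bool" where
  "pi_stable F sim \<pi> W \<longleftrightarrow> W = [] \<or>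
     (\<exists>Ws. stable_partition F sim W Ws \<and> (\<forall>b\<in>set Ws. sorted_wrt (\<lambda>f g. \<pi> f < \<pi> g) b))"

definition R_W :: "'a set set \<Rightarrow> ('a set \<Rightarrow> 'a set \<Rightarrow> bool) \<Rightarrow> 'a set list \<Rightarrow> 'a set set" where
  "R_W F sim W = (if W = [] then {} else set (hd (THE Ws. stable_partition F sim W Ws)))"

definition Stab :: "'a set \<Rightarrow> 'a set set \<Rightarrow> ('a set \<Rightarrow> 'a \<Rightarrow> 'a \<Rightarrow> real) \<Rightarrow> ('a set \<Rightarrow> 'a set \<Rightarrow> bool)
    \<Rightarrow> ('a set \<Rightarrow> nat) \<Rightarrow> 'a set list set" where
  "Stab \<Omega> F \<rho> sim \<pi> = {W. pi_stable F sim \<pi> W \<and>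
     (\<exists>\<tau>. is_walk \<Omega> F \<rho> \<tau> \<and> (word \<tau> = W \<or> word \<tau> = rev W))}"

end

theory Submission
  imports Defs
begin

text \<open>Each walk is normalized from its end: once the walk after its first step h is normalized,
  h is moved to the right by valid swaps past the steps whose flaws do not conflict with it, until
  the word read backwards is \<pi>-stable again; in the reversed word, h joins the block right after
  the last block containing a flaw that conflicts with h. For a target flaw f only the prefix up to
  the last occurrence of f is kept in this form, and a step conflicting with no flaw of that prefix
  is moved past all of it, so that R_W stays {f}. The shift of h can be read off the normalized
  prefix and SWAP is injective, so normalization is injective; likewise two walks of a valid set
  with the same normalized prefix make the same choices step by step, so each fibre is valid.\<close>

section \<open>Inserting into lists\<close>

definition insert_at :: "nat \<Rightarrow> 'b \<Rightarrow> 'b list \<Rightarrow> 'b list" where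
  "insert_at k x xs = take k xs @ x # drop k xs"

lemma insert_at_0 [simp]: "insert_at 0 x xs = x # xs"
  by (simp add: insert_at_def)

lemma insert_at_not_Nil [simp]: "insert_at k x xs \<noteq> []"
  by (simp add: insert_at_def)

lemma insert_at_Nil [simp]: "insert_at k x [] = [x]"
  by (simp add: insert_at_def)

lemma insert_at_Suc_Cons [simp]: "insert_at (Suc k) x (y # xs) = y # insert_at k x xs"
  by (simp add: insert_at_def)

lemma length_insert_at [simp]: "length (insert_at k x xs) = Suc (length xs)"
  by (simp add: insert_at_def)

lemma set_insert_at [simp]: "set (insert_at k x xs) = insert x (set xs)"
  unfolding insert_at_def by (metis append_take_drop_id list.set(2) set_append Un_insert_right)

lemma distinct_insert_at: "distinct (insert_at k x xs) \<longleftrightarrow> x \<notin> set xs \<and> distinct xs"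
proof (induction xs arbitrary: k)
  case (Cons y ys) then show ?case by (cases k) auto
qed simp

lemma last_insert_at: "k < length xs \<Longrightarrow> last (insert_at k x xs) = last xs"
  by (simp add: insert_at_def)

lemma append_insert_at: "xs @ insert_at k x ys = insert_at (length xs + k) x (xs @ ys)"
  by (simp add: insert_at_def)

lemma insert_at_append: "k \<le> length xs \<Longrightarrow> insert_at k x xs @ ys = insert_at k x (xs @ ys)"
  by (simp add: insert_at_def)

lemma rev_insert_at: "rev (insert_at k x xs) = insert_at (length xs - k) x (rev xs)"
  unfolding insert_at_def rev_append rev.simps rev_take rev_drop by simp

lemma nth_insert_at_le: "j \<le> k \<Longrightarrow> k \<le> length xs \<Longrightarrow> insert_at k x xs ! j = (take k xs @ [x]) ! j"
  unfolding insert_at_def by (cases "j < k") (auto simp: nth_append)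

lemma nth_via_drop:
  assumes "drop (Suc k) xs = drop k ys" "k < j" "j < length xs"
  shows "xs ! j = ys ! (j - 1)"
proof -
  have "xs ! j = drop (Suc k) xs ! (j - Suc k)" using assms(2,3) by simp
  also have "\<dots> = drop k ys ! (j - Suc k)" by (simp only: assms(1))
  also have "\<dots> = ys ! (j - 1)"
  proof -
    have "j - Suc k < length (drop (Suc k) xs)" using assms(2,3) by simp
    then have "j - Suc k < length (drop k ys)" by (simp only: assms(1))
    then show ?thesis using assms(2) by (simp add: nth_drop)
  qed
  finally show ?thesis .
qed

lemma append_Cons_eq_first_occ:
  "x \<notin> set ys \<Longrightarrow> x \<notin> set ys' \<Longrightarrow> ys @ x # zs = ys' @ x # zs' \<Longrightarrow> ys = ys' \<and> zs = zs'"
proof (induction ys arbitrary: ys')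
  case Nil then show ?case by (cases ys') auto
next
  case (Cons y ys) then show ?case by (cases ys') auto
qed

lemma insert_at_inject:
  assumes "x \<notin> set (take k xs)" "x \<notin> set (take k' xs')" "k \<le> length xs" "k' \<le> length xs'"
    and "insert_at k x xs = insert_at k' x xs'"
  shows "k = k' \<and> xs = xs'"
proof -
  have "take k xs = take k' xs' \<and> drop k xs = drop k' xs'"
    using append_Cons_eq_first_occ[OF assms(1,2)] assms(5) unfolding insert_at_def by blast
  then show ?thesis using assms(3,4) by (metis append_take_drop_id length_take min.absorb2)
qed

section \<open>Valid sets of walks\<close>

lemma walk_from_append:
  "walk_from \<Omega> F \<rho> \<sigma> (xs @ ys) \<longleftrightarrow>
   walk_from \<Omega> F \<rho> \<sigma> xs \<and> walk_from \<Omega> F \<rho> (last (\<sigma> # map snd xs)) ys"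
  by (induction xs arbitrary: \<sigma>) auto

lemma step_flaw: "step \<Omega> F \<rho> \<sigma> f \<sigma>' \<Longrightarrow> f \<in> F"
  unfolding step_def flaws_at_def by simp

lemma walk_from_nth_step:
  assumes "walk_from \<Omega> F \<rho> \<sigma> xs" "n < length xs"
  shows "step \<Omega> F \<rho> (last (\<sigma> # map snd (take n xs))) (fst (xs ! n)) (snd (xs ! n))"
proof -
  have "xs = take n xs @ xs ! n # drop (Suc n) xs" using assms(2) by (simp add: id_take_nth_drop)
  then have "walk_from \<Omega> F \<rho> (last (\<sigma> # map snd (take n xs))) (xs ! n # drop (Suc n) xs)"
    using assms(1) walk_from_append by metis
  then show ?thesis by (cases "xs ! n") simp
qed

definition same_choices :: "('b \<times> 'c) list \<Rightarrow> ('b \<times> 'c) list \<Rightarrow> bool" where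
  "same_choices xs ys \<longleftrightarrow> (\<forall>j. take j xs = take j ys \<longrightarrow>
     (j < length xs \<longleftrightarrow> j < length ys) \<and> (j < length xs \<longrightarrow> fst (xs ! j) = fst (ys ! j)))"

lemma same_choices_Cons: "same_choices (x # xs) (x # ys) \<Longrightarrow> same_choices xs ys"
  unfolding same_choices_def
proof (intro allI impI)
  fix j assume "\<forall>j. take j (x # xs) = take j (x # ys) \<longrightarrow>
      (j < length (x # xs) \<longleftrightarrow> j < length (x # ys)) \<and>
      (j < length (x # xs) \<longrightarrow> fst ((x # xs) ! j) = fst ((x # ys) ! j))"
    and "take j xs = take j ys"
  then show "(j < length xs \<longleftrightarrow> j < length ys) \<and> (j < length xs \<longrightarrow> fst (xs ! j) = fst (ys ! j))"
    by (auto elim!: allE[of _ "Suc j"])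
qed

definition same_choices_on :: "'a walk set \<Rightarrow> bool" where
  "same_choices_on S \<longleftrightarrow>
     (\<forall>\<tau>1\<in>S. \<forall>\<tau>2\<in>S. fst \<tau>1 = fst \<tau>2 \<longrightarrow> same_choices (snd \<tau>1) (snd \<tau>2))"

lemma same_choices_if_valid_set:
  assumes "valid_set \<Omega> F \<rho> S"
  shows "same_choices_on S"
  unfolding same_choices_on_def same_choices_def
proof (intro ballI allI impI)
  fix \<tau>1 \<tau>2 j assume "\<tau>1 \<in> S" "\<tau>2 \<in> S" "fst \<tau>1 = fst \<tau>2" and j: "take j (snd \<tau>1) = take j (snd \<tau>2)"
  note \<tau> = this(1-3)
  obtain str where str: "\<forall>\<tau>\<in>S. follows str \<tau>"
    and prefix_free: "\<forall>\<tau>\<in>S. \<forall>\<tau>'\<in>S. \<not> proper_prefix \<tau> \<tau>'"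
    using assms(1) unfolding valid_set_def by blast
  have longer: "j < length (snd \<tau>')" if "\<tau> \<in> S" "\<tau>' \<in> S" "fst \<tau> = fst \<tau>'"
    "take j (snd \<tau>) = take j (snd \<tau>')" "j < length (snd \<tau>)" for \<tau> \<tau>'
  proof (rule ccontr)
    assume "\<not> j < length (snd \<tau>')"
    then have "snd \<tau> = snd \<tau>' @ drop j (snd \<tau>)" "drop j (snd \<tau>) \<noteq> []"
      using that(4,5) by (metis append_take_drop_id take_all not_less, simp)
    then have "proper_prefix \<tau>' \<tau>" unfolding proper_prefix_def using that(3) by metis
    then show False using prefix_free that(1,2) by blast
  qed
  have "j < length (snd \<tau>1) \<longleftrightarrow> j < length (snd \<tau>2)"
    using longer[OF \<tau> j] longer[OF \<tau>(2,1) \<tau>(3)[symmetric] j[symmetric]] by blast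
  moreover have "fst (snd \<tau>1 ! j) = fst (snd \<tau>2 ! j)" if "j < length (snd \<tau>1)"
  proof -
    have "fst (snd \<tau>1 ! j) = str (fst \<tau>1, take j (snd \<tau>1))" using str \<tau>(1) that follows_def by blast
    also have "\<dots> = str (fst \<tau>2, take j (snd \<tau>2))" using \<tau>(3) j by simp
    also have "\<dots> = fst (snd \<tau>2 ! j)"
      using str \<tau>(2) that \<open>j < length (snd \<tau>1) \<longleftrightarrow> j < length (snd \<tau>2)\<close> follows_def by metis
    finally show ?thesis .
  qed
  ultimately show "(j < length (snd \<tau>1) \<longleftrightarrow> j < length (snd \<tau>2)) \<and>
      (j < length (snd \<tau>1) \<longrightarrow> fst (snd \<tau>1 ! j) = fst (snd \<tau>2 ! j))" by blast
qed

definition strictly_extends :: "'a walk \<Rightarrow> 'a walk \<Rightarrow> bool" where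
  "strictly_extends r \<tau> \<longleftrightarrow> fst \<tau> = fst r \<and> length (snd r) < length (snd \<tau>) \<and>
     take (length (snd r)) (snd \<tau>) = snd r"

text \<open>If no walk of S strictly extends r, an arbitrary flaw of its last state is chosen.\<close>

definition strategy_of :: "'a set set \<Rightarrow> 'a walk set \<Rightarrow> 'a walk \<Rightarrow> 'a set" where
  "strategy_of F S r =
     (if \<exists>\<tau>\<in>S. strictly_extends r \<tau>
      then fst (snd (SOME \<tau>. \<tau> \<in> S \<and> strictly_extends r \<tau>) ! length (snd r))
      else (SOME g. g \<in> flaws_at F (last_state r)))"

lemma strategy_of_extends:
  assumes "same_choices_on S" "\<tau> \<in> S" "strictly_extends r \<tau>"
  shows "strategy_of F S r = fst (snd \<tau> ! length (snd r))"
proof -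
  define \<tau>0 where "\<tau>0 = (SOME \<tau>. \<tau> \<in> S \<and> strictly_extends r \<tau>)"
  have \<tau>0: "\<tau>0 \<in> S \<and> strictly_extends r \<tau>0" unfolding \<tau>0_def using assms(2,3) by (metis (mono_tags, lifting) someI)
  then have "same_choices (snd \<tau>0) (snd \<tau>)"
    using assms unfolding same_choices_on_def strictly_extends_def by metis
  moreover have "take (length (snd r)) (snd \<tau>0) = take (length (snd r)) (snd \<tau>)"
    "length (snd r) < length (snd \<tau>0)"
    using \<tau>0 assms(3) unfolding strictly_extends_def by auto
  ultimately have "fst (snd \<tau>0 ! length (snd r)) = fst (snd \<tau> ! length (snd r))"
    unfolding same_choices_def by blast
  moreover have "strategy_of F S r = fst (snd \<tau>0 ! length (snd r))"
    unfolding strategy_of_def \<tau>0_def using assms(2,3) by (metis (mono_tags))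
  ultimately show ?thesis by simp
qed

lemma det_strategy_strategy_of:
  assumes "\<forall>\<tau>\<in>S. is_walk \<Omega> F \<rho> \<tau>" "same_choices_on S"
  shows "det_strategy \<Omega> F \<rho> (strategy_of F S)"
  unfolding det_strategy_def
proof (intro allI impI)
  fix r assume r: "is_walk \<Omega> F \<rho> r \<and> flaws_at F (last_state r) \<noteq> {}"
  show "strategy_of F S r \<in> flaws_at F (last_state r)"
  proof (cases "\<exists>\<tau>\<in>S. strictly_extends r \<tau>")
    case True
    then obtain \<tau> where \<tau>: "\<tau> \<in> S" "strictly_extends r \<tau>" by blast
    then have "walk_from \<Omega> F \<rho> (fst \<tau>) (snd \<tau>)" "length (snd r) < length (snd \<tau>)"
      using assms(1) unfolding strictly_extends_def is_walk_def by auto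
    from walk_from_nth_step[OF this] show ?thesis
      using \<tau> strategy_of_extends[OF assms(2) \<tau>]
      unfolding strictly_extends_def step_def last_state_def by simp
  next
    case False
    then show ?thesis using r unfolding strategy_of_def by (simp add: some_in_eq)
  qed
qed

lemma follows_strategy_of: "same_choices_on S \<Longrightarrow> \<tau> \<in> S \<Longrightarrow> follows (strategy_of F S) \<tau>"
  unfolding follows_def
proof (intro allI impI)
  fix i assume "same_choices_on S" "\<tau> \<in> S" "i < length (snd \<tau>)"
  moreover from this have "strictly_extends (fst \<tau>, take i (snd \<tau>)) \<tau>"
    unfolding strictly_extends_def by simp
  ultimately show "fst (snd \<tau> ! i) = strategy_of F S (fst \<tau>, take i (snd \<tau>))"
    using strategy_of_extends by fastforce
qed

lemma valid_set_if_same_choices: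
  assumes walks: "\<forall>\<tau>\<in>S. is_walk \<Omega> F \<rho> \<tau>" and choices: "same_choices_on S"
  shows "valid_set \<Omega> F \<rho> S"
proof -
  have "\<not> proper_prefix \<tau> \<tau>'" if "\<tau> \<in> S" "\<tau>' \<in> S" for \<tau> \<tau>'
  proof
    assume "proper_prefix \<tau> \<tau>'"
    then obtain xs where xs: "fst \<tau> = fst \<tau>'" "xs \<noteq> []" "snd \<tau>' = snd \<tau> @ xs"
      unfolding proper_prefix_def by blast
    then have "same_choices (snd \<tau>) (snd \<tau>')" using choices that unfolding same_choices_on_def by blast
    moreover have "take (length (snd \<tau>)) (snd \<tau>) = take (length (snd \<tau>)) (snd \<tau>')" using xs(3) by simp
    ultimately have "length (snd \<tau>) < length (snd \<tau>) \<longleftrightarrow> length (snd \<tau>) < length (snd \<tau>')"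
      unfolding same_choices_def by blast
    then show False using xs(2,3) by simp
  qed
  then show ?thesis
    unfolding valid_set_def using walks det_strategy_strategy_of[OF walks choices]
      follows_strategy_of[OF choices] by blast
qed

section \<open>Stable block partitions\<close>

locale flaw_order =
  fixes F :: "'a set set" and sim :: "'a set \<Rightarrow> 'a set \<Rightarrow> bool" and \<pi> :: "'a set \<Rightarrow> nat"
  assumes sim_sym: "sim f g \<Longrightarrow> sim g f"
    and inj_\<pi>: "inj_on \<pi> F"
begin

definition conflict :: "'a set \<Rightarrow> 'a set \<Rightarrow> bool" where
  "conflict g h \<longleftrightarrow> sim g h \<or> g = h"

definition conflicts :: "'a set \<Rightarrow> 'a set list \<Rightarrow> bool" where
  "conflicts h xs \<longleftrightarrow> (\<exists>x\<in>set xs. conflict x h)"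

lemma not_conflict_iff: "\<not> conflict g h \<longleftrightarrow> \<not> sim h g \<and> h \<noteq> g"
  unfolding conflict_def using sim_sym by blast

lemma Gamma_plus_iff_conflict: "h \<in> F \<Longrightarrow> h \<in> Gamma_plus F sim S \<longleftrightarrow> (\<exists>x\<in>S. conflict x h)"
  unfolding Gamma_plus_def Gamma_def conflict_def by auto

lemma Gamma_plus_mono: "S \<subseteq> T \<Longrightarrow> Gamma_plus F sim S \<subseteq> Gamma_plus F sim T"
  unfolding Gamma_plus_def by auto

definition indep_block :: "'a set list \<Rightarrow> bool" where
  "indep_block B \<longleftrightarrow> B \<noteq> [] \<and> distinct B \<and> independent F sim (set B)"

lemma indep_block_subset: "indep_block B \<Longrightarrow> set B \<subseteq> F"
  unfolding indep_block_def independent_def by auto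

lemma indep_block_singleton: "h \<in> F \<Longrightarrow> indep_block [h]"
  unfolding indep_block_def independent_def by simp

text \<open>Recursive form of stable partitions, see stable_partition_iff.\<close>

fun stable_blocks :: "'a set list list \<Rightarrow> bool" where
  "stable_blocks [] = False"
| "stable_blocks [B] = indep_block B"
| "stable_blocks (B # C # Bs) \<longleftrightarrow>
     indep_block B \<and> set C \<subseteq> Gamma_plus F sim (set B) \<and> stable_blocks (C # Bs)"

definition sorted_blocks :: "'a set list list \<Rightarrow> bool" where
  "sorted_blocks Ws \<longleftrightarrow> (\<forall>B\<in>set Ws. sorted_wrt (\<lambda>f g. \<pi> f < \<pi> g) B)"

lemma stable_blocks_nonempty: "stable_blocks Ws \<Longrightarrow> Ws \<noteq> []"
  by (cases Ws) auto

lemma stable_blocks_hd: "stable_blocks (B # Bs) \<Longrightarrow> indep_block B"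
  by (cases Bs) auto

lemma stable_blocks_tl: "stable_blocks (B # Bs) \<Longrightarrow> Bs \<noteq> [] \<Longrightarrow> stable_blocks Bs"
  by (cases Bs) auto

lemma stable_blocks_concat_nonempty: "stable_blocks Ws \<Longrightarrow> concat Ws \<noteq> []"
  by (cases Ws) (auto dest: stable_blocks_hd simp: indep_block_def)

lemma stable_blocks_singleton: "h \<in> F \<Longrightarrow> stable_blocks [[h]] \<and> sorted_blocks [[h]]"
  by (simp add: indep_block_singleton sorted_blocks_def)

definition sorted_pos :: "'a set \<Rightarrow> 'a set list \<Rightarrow> nat" where
  "sorted_pos h B = length (takeWhile (\<lambda>x. \<pi> x < \<pi> h) B)"

definition insert_sorted :: "'a set \<Rightarrow> 'a set list \<Rightarrow> 'a set list" where
  "insert_sorted h B = insert_at (sorted_pos h B) h B"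

lemma sorted_pos_le: "sorted_pos h B \<le> length B"
  unfolding sorted_pos_def by (rule length_takeWhile_le)

lemma set_insert_sorted [simp]: "set (insert_sorted h B) = insert h (set B)"
  by (simp add: insert_sorted_def)

lemma indep_block_insert_sorted:
  assumes "indep_block B" "h \<in> F" "\<not> conflicts h B"
  shows "indep_block (insert_sorted h B)"
proof -
  have "h \<notin> set B" "\<forall>x\<in>set B. \<not> sim h x \<and> \<not> sim x h"
    using assms(3) sim_sym unfolding conflicts_def conflict_def by blast+
  then show ?thesis using assms(1,2)
    unfolding indep_block_def insert_sorted_def independent_def by (auto simp: distinct_insert_at)
qed

lemma sorted_insert_sorted:
  assumes "sorted_wrt (\<lambda>f g. \<pi> f < \<pi> g) B" "\<forall>x\<in>set B. \<pi> x \<noteq> \<pi> h"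
  shows "sorted_wrt (\<lambda>f g. \<pi> f < \<pi> g) (insert_sorted h B)"
proof -
  let ?P = "\<lambda>x. \<pi> x < \<pi> h"
  have split: "insert_sorted h B = takeWhile ?P B @ h # dropWhile ?P B"
    unfolding insert_sorted_def insert_at_def sorted_pos_def
    by (simp flip: takeWhile_eq_take dropWhile_eq_drop)
  have sorted_parts: "sorted_wrt (\<lambda>f g. \<pi> f < \<pi> g) (takeWhile ?P B)"
      "sorted_wrt (\<lambda>f g. \<pi> f < \<pi> g) (dropWhile ?P B)"
    using assms(1) by (metis sorted_wrt_append takeWhile_dropWhile_id)+
  have before: "\<pi> x < \<pi> h" if "x \<in> set (takeWhile ?P B)" for x
    using that by (auto dest: set_takeWhileD)
  have after: "\<pi> h < \<pi> y" if y: "y \<in> set (dropWhile ?P B)" for y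
  proof -
    obtain y0 ys where Cons: "dropWhile ?P B = y0 # ys" using y by (meson list.set_cases)
    then have "y0 \<in> set B" "\<not> \<pi> y0 < \<pi> h"
      using set_dropWhileD[of y0 ?P B] hd_dropWhile[of ?P B] by simp_all
    then have "\<pi> h < \<pi> y0" using assms(2) by force
    have "y = y0 \<or> \<pi> y0 < \<pi> y" using y Cons sorted_parts(2) by auto
    with \<open>\<pi> h < \<pi> y0\<close> show ?thesis by auto
  qed
  show ?thesis
    unfolding split using sorted_parts before after by (fastforce simp: sorted_wrt_append)
qed

fun insert_blocks :: "'a set \<Rightarrow> 'a set list list \<Rightarrow> 'a set list list" where
  "insert_blocks h [] = [[h]]"
| "insert_blocks h (B # Bs) =
     (if conflicts h (concat (B # Bs)) then B # insert_blocks h Bs else insert_sorted h B # Bs)"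

fun insert_pos :: "'a set \<Rightarrow> 'a set list list \<Rightarrow> nat" where
  "insert_pos h [] = 0"
| "insert_pos h (B # Bs) =
     (if conflicts h (concat (B # Bs)) then length B + insert_pos h Bs else sorted_pos h B)"

lemma insert_pos_le: "insert_pos h Ws \<le> length (concat Ws)"
  by (induction Ws) (auto simp: sorted_pos_le trans_le_add1)

lemma concat_insert_blocks: "concat (insert_blocks h Ws) = insert_at (insert_pos h Ws) h (concat Ws)"
  by (induction Ws) (auto simp: append_insert_at insert_at_append insert_sorted_def sorted_pos_le)

lemma no_conflict_after_insert_pos:
  "x \<in> set (drop (insert_pos h Ws) (concat Ws)) \<Longrightarrow> \<not> conflict x h"
proof (induction Ws)
  case (Cons B Bs)
  then show ?case
    by (auto simp: conflicts_def split: if_splits dest: in_set_dropD)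
qed simp

lemma hd_insert_blocks:
  "conflicts h (concat Ws) \<Longrightarrow> hd (insert_blocks h Ws) = hd Ws \<and> length (hd Ws) \<le> insert_pos h Ws"
  by (cases Ws) (auto simp: conflicts_def)

lemma stable_insert_blocks: "stable_blocks Ws \<Longrightarrow> h \<in> F \<Longrightarrow> stable_blocks (insert_blocks h Ws)"
proof (induction Ws)
  case (Cons B Bs)
  have B: "indep_block B" using Cons.prems(1) by (rule stable_blocks_hd)
  show ?case
  proof (cases "conflicts h (concat (B # Bs))")
    case conflict: True
    show ?thesis
    proof (cases Bs)
      case Nil
      then have "h \<in> Gamma_plus F sim (set B)"
        using conflict Gamma_plus_iff_conflict[OF Cons.prems(2)] by (simp add: conflicts_def)
      then show ?thesis using Nil conflict B indep_block_singleton[OF Cons.prems(2)] by simp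
    next
      case (Cons C Cs)
      have "set (hd (insert_blocks h Bs)) \<subseteq> Gamma_plus F sim (set B)"
      proof (cases "conflicts h (concat Bs)")
        case False
        then have "h \<in> Gamma_plus F sim (set B)"
          using conflict Gamma_plus_iff_conflict[OF Cons.prems(2)] by (auto simp: conflicts_def)
        then show ?thesis using False Cons Cons.prems(1) by simp
      qed (use Cons Cons.prems(1) in simp)
      moreover have "stable_blocks (insert_blocks h Bs)"
        using Cons.IH Cons.prems stable_blocks_tl Cons by blast
      ultimately show ?thesis
        using conflict B by (cases "insert_blocks h Bs") auto
    qed
  next
    case False
    then have B': "indep_block (insert_sorted h B)"
      using indep_block_insert_sorted[OF B Cons.prems(2)] by (simp add: conflicts_def)
    show ?thesis
    proof (cases Bs)
      case (Cons C Cs)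
      have "set C \<subseteq> Gamma_plus F sim (set B)" using Cons.prems(1) Cons by simp
      also have "\<dots> \<subseteq> Gamma_plus F sim (set (insert_sorted h B))" by (rule Gamma_plus_mono) auto
      finally show ?thesis using False B' Cons Cons.prems(1) by simp
    qed (use False B' in simp)
  qed
qed simp

lemma sorted_insert_blocks:
  assumes "sorted_blocks Ws" "set (concat Ws) \<subseteq> F" "h \<in> F"
  shows "sorted_blocks (insert_blocks h Ws)"
  using assms(1,2)
proof (induction Ws)
  case (Cons B Bs)
  show ?case
  proof (cases "conflicts h (concat (B # Bs))")
    case False
    have "\<pi> x \<noteq> \<pi> h" if "x \<in> set B" for x
    proof -
      have "x \<noteq> h" using False that by (auto simp: conflicts_def conflict_def)
      then show ?thesis using inj_\<pi> assms(3) that Cons.prems(2) by (auto dest: inj_onD)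
    qed
    then show ?thesis using Cons.prems(1) False sorted_insert_sorted by (simp add: sorted_blocks_def)
  qed (use Cons in \<open>simp add: sorted_blocks_def\<close>)
qed (simp add: sorted_blocks_def)

lemma stable_blocks_subset: "stable_blocks Ws \<Longrightarrow> set (concat Ws) \<subseteq> F"
  by (induction Ws rule: stable_blocks.induct) (auto dest: indep_block_subset)

text \<open>The first flaw of the second block lies in Gamma_plus of the first block, so it cannot
  belong to a longer, still independent first block.\<close>

lemma first_block_not_shorter:
  assumes "stable_blocks (B1 # R1)" "stable_blocks (B2 # R2)" "B1 @ concat R1 = B2 @ concat R2"
  shows "length B2 \<le> length B1"
proof (rule ccontr)
  assume "\<not> length B2 \<le> length B1"
  then obtain us where B2: "B2 = B1 @ us" and R1: "concat R1 = us @ concat R2" and "us \<noteq> []"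
    using assms(3) by (auto simp: append_eq_append_conv2)
  then obtain C R1' where C: "R1 = C # R1'" by (cases R1) auto
  then have "indep_block C" "set C \<subseteq> Gamma_plus F sim (set B1)"
    using assms(1) stable_blocks_hd by auto
  then have "C \<noteq> []" "hd C \<in> Gamma_plus F sim (set B1)" by (auto simp: indep_block_def)
  moreover have x: "hd C \<in> set us"
    using R1 C \<open>C \<noteq> []\<close> \<open>us \<noteq> []\<close> by (metis concat.simps(2) hd_append2 list.set_sel(1))
  moreover have "indep_block B2" using assms(2) by (rule stable_blocks_hd)
  moreover have "hd C \<in> F" using x \<open>indep_block B2\<close> B2 indep_block_subset by fastforce
  ultimately obtain b where "b \<in> set B1" "conflict b (hd C)"
    using Gamma_plus_iff_conflict by blast
  moreover have "distinct (B1 @ us)" "independent F sim (set (B1 @ us))"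
    using \<open>indep_block B2\<close> unfolding B2 indep_block_def by auto
  ultimately show False
    using x unfolding conflict_def independent_def by (metis UnI1 UnI2 disjoint_iff set_append distinct_append)
qed

lemma stable_blocks_unique:
  "stable_blocks Ws1 \<Longrightarrow> stable_blocks Ws2 \<Longrightarrow> concat Ws1 = concat Ws2 \<Longrightarrow> Ws1 = Ws2"
proof (induction Ws1 arbitrary: Ws2)
  case (Cons B1 R1)
  obtain B2 R2 where Ws2: "Ws2 = B2 # R2"
    using Cons.prems(2) stable_blocks_nonempty by (cases Ws2) auto
  have eq: "B1 @ concat R1 = B2 @ concat R2" using Cons.prems(3) Ws2 by simp
  have "length B1 = length B2"
    using first_block_not_shorter[OF Cons.prems(1) _ eq] first_block_not_shorter[OF _ Cons.prems(1) eq[symmetric]]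
      Cons.prems(2) Ws2 by fastforce
  then have B: "B1 = B2" and R: "concat R1 = concat R2" using eq by auto
  have "R1 = R2"
  proof (cases "R1 = [] \<or> R2 = []")
    case True
    then show ?thesis using R Cons.prems(1,2) Ws2 stable_blocks_tl stable_blocks_concat_nonempty
      by (metis concat.simps(1))
  next
    case False
    then show ?thesis using Cons.IH R Cons.prems(1,2) Ws2 stable_blocks_tl by blast
  qed
  then show ?case using B Ws2 by simp
qed simp

lemma stable_partition_iff: "stable_partition F sim V Ws \<longleftrightarrow> V = concat Ws \<and> stable_blocks Ws"
proof -
  have "stable_blocks Ws \<longleftrightarrow> Ws \<noteq> [] \<and> (\<forall>B\<in>set Ws. indep_block B) \<and>
     (\<forall>r. Suc r < length Ws \<longrightarrow> set (Ws ! Suc r) \<subseteq> Gamma_plus F sim (set (Ws ! r)))"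
  proof (induction Ws rule: stable_blocks.induct)
    case (3 B C Bs)
    have all_nat: "(\<forall>r. Q r) \<longleftrightarrow> Q 0 \<and> (\<forall>r. Q (Suc r))" for Q :: "nat \<Rightarrow> bool"
      by (metis nat.exhaust)
    show ?case unfolding stable_blocks.simps(3) 3 by (subst (2) all_nat) auto
  qed auto
  then show ?thesis unfolding stable_partition_def stable_seq_def indep_block_def by auto
qed

definition partition_of :: "'a set list \<Rightarrow> 'a set list list" where
  "partition_of V = (THE Ws. stable_partition F sim V Ws)"

lemma partition_of_concat: "stable_blocks Ws \<Longrightarrow> partition_of (concat Ws) = Ws"
  unfolding partition_of_def stable_partition_iff
  by (rule the_equality) (auto intro: stable_blocks_unique)

lemma pi_stable_concat: "stable_blocks Ws \<Longrightarrow> sorted_blocks Ws \<Longrightarrow> pi_stable F sim \<pi> (concat Ws)"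
  unfolding pi_stable_def sorted_blocks_def by (auto simp: stable_partition_iff)

lemma R_W_concat: "stable_blocks Ws \<Longrightarrow> R_W F sim (concat Ws) = set (hd Ws)"
  using partition_of_concat[of Ws] stable_blocks_concat_nonempty[of Ws]
  unfolding R_W_def partition_of_def by presburger

end

section \<open>Normal words\<close>

locale normal_form = flaw_order F sim \<pi>
  for F :: "'a set set" and sim and \<pi> +
  fixes fh :: "'a set option"
  assumes target_flaw: "fh = Some f \<Longrightarrow> f \<in> F"
begin

definition word_upto :: "'a set list \<Rightarrow> 'a set list" where
  "word_upto w = (case fh of None \<Rightarrow> w
     | Some f \<Rightarrow> take (Suc (GREATEST i. i < length w \<and> w ! i = f)) w)"

lemma W_upto_eq_word_upto: "W_upto fh \<tau> = word_upto (word \<tau>)"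
  by (simp add: W_upto_def word_upto_def split: option.split)

lemma word_upto_None: "fh = None \<Longrightarrow> word_upto w = w"
  unfolding word_upto_def by simp

lemma word_upto_prefix: "word_upto w = take (length (word_upto w)) w"
  unfolding word_upto_def by (cases fh) (auto simp: min_def)

lemma length_word_upto_le: "length (word_upto w) \<le> length w"
  by (metis word_upto_prefix length_take min.cobounded1)

lemma word_upto_eqI:
  assumes "fh = Some f" "w = u @ rest" "u \<noteq> []" "last u = f" "f \<notin> set rest"
  shows "word_upto w = u"
proof -
  have "(GREATEST i. i < length w \<and> w ! i = f) = length u - 1"
  proof (rule Greatest_equality)
    show "length u - 1 < length w \<and> w ! (length u - 1) = f"
      using assms(2-4) by (cases u rule: rev_cases) (auto simp: nth_append)
  next
    fix i assume i: "i < length w \<and> w ! i = f"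
    show "i \<le> length u - 1"
    proof (rule ccontr)
      assume "\<not> i \<le> length u - 1"
      then have "\<not> i < length u" by simp
      then have "rest ! (i - length u) = f" "i - length u < length rest"
        using assms(2) i by (auto simp: nth_append)
      then show False using assms(5) by (metis nth_mem)
    qed
  qed
  then show ?thesis using assms unfolding word_upto_def by (cases u rule: rev_cases) auto
qed

lemma word_upto_split:
  assumes "fh = Some f" "f \<in> set w"
  obtains rest where "w = word_upto w @ rest" "word_upto w \<noteq> []" "last (word_upto w) = f"
    "f \<notin> set rest"
proof -
  obtain ys zs where "w = ys @ f # zs" "f \<notin> set zs" using split_list_last[OF assms(2)] by blast
  moreover from this have "word_upto w = ys @ [f]"
    using word_upto_eqI[OF assms(1), of w "ys @ [f]" zs] by simp
  ultimately show ?thesis using that by simp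
qed

definition normal_word :: "'a set list \<Rightarrow> bool" where
  "normal_word w \<longleftrightarrow> (case fh of
      None \<Rightarrow> w \<noteq> [] \<longrightarrow> (\<exists>Ws. stable_blocks Ws \<and> sorted_blocks Ws \<and> concat Ws = rev w)
    | Some f \<Rightarrow> f \<in> set w \<longrightarrow>
        (\<exists>Ws. stable_blocks Ws \<and> sorted_blocks Ws \<and> concat Ws = rev (word_upto w) \<and> hd Ws = [f]))"

text \<open>The number of positions by which a new first step h is moved to the right when it is
  prepended to the normal word w. For w = [] the truncated subtraction yields 0.\<close>

definition shift :: "'a set \<Rightarrow> 'a set list \<Rightarrow> nat" where
  "shift h w = (case fh of
      None \<Rightarrow> length w - insert_pos h (partition_of (rev w))
    | Some f \<Rightarrow>
        if f \<notin> set w then 0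
        else if conflicts h (word_upto w)
          then length (word_upto w) - insert_pos h (partition_of (rev (word_upto w)))
        else length (word_upto w))"

lemma normal_word_Nil: "normal_word []"
  unfolding normal_word_def by (cases fh) auto

lemma insert_blocks_rev:
  assumes "stable_blocks Ws" "sorted_blocks Ws" "concat Ws = rev u" "h \<in> F"
  defines "k \<equiv> length u - insert_pos h Ws"
  shows "k \<le> length u" "\<forall>g\<in>set (take k u). \<not> conflict g h"
    "concat (insert_blocks h Ws) = rev (insert_at k h u)"
    "stable_blocks (insert_blocks h Ws)" "sorted_blocks (insert_blocks h Ws)"
    "conflicts h u \<Longrightarrow> hd (insert_blocks h Ws) = hd Ws \<and> k < length u"
proof -
  have pos: "insert_pos h Ws \<le> length u" using insert_pos_le[of h Ws] assms(3) by simp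
  show "k \<le> length u" unfolding k_def by simp
  have "set (take k u) = set (drop (insert_pos h Ws) (concat Ws))"
    unfolding assms(3) k_def by (simp add: drop_rev)
  then show "\<forall>g\<in>set (take k u). \<not> conflict g h" using no_conflict_after_insert_pos by blast
  show "concat (insert_blocks h Ws) = rev (insert_at k h u)"
    unfolding concat_insert_blocks rev_insert_at k_def assms(3) using pos by simp
  show "stable_blocks (insert_blocks h Ws)" using stable_insert_blocks assms(1,4) .
  show "sorted_blocks (insert_blocks h Ws)"
    using sorted_insert_blocks assms(1,2,4) stable_blocks_subset by blast
  assume "conflicts h u"
  then have hd: "hd (insert_blocks h Ws) = hd Ws" "length (hd Ws) \<le> insert_pos h Ws"
    using hd_insert_blocks[of h Ws] assms(3) by (auto simp: conflicts_def)
  moreover have "hd Ws \<noteq> []"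
    using assms(1) stable_blocks_nonempty stable_blocks_hd by (metis indep_block_def list.collapse)
  ultimately have "0 < insert_pos h Ws" by (metis le_zero_eq length_0_conv neq0_conv)
  moreover have "u \<noteq> []" using \<open>conflicts h u\<close> by (auto simp: conflicts_def)
  ultimately show "hd (insert_blocks h Ws) = hd Ws \<and> k < length u" unfolding k_def using hd(1) by auto
qed

lemma shift_None:
  assumes "fh = None" "normal_word w" "h \<in> F"
  shows "shift h w \<le> length w \<and> (\<forall>g\<in>set (take (shift h w) w). \<not> conflict g h) \<and>
    normal_word (insert_at (shift h w) h w)"
proof (cases "w = []")
  case True
  then show ?thesis using assms stable_blocks_singleton[OF assms(3)]
    unfolding shift_def normal_word_def by (auto intro!: exI[of _ "[[h]]"])
next
  case False
  then obtain Ws where Ws: "stable_blocks Ws" "sorted_blocks Ws" "concat Ws = rev w"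
    using assms(1,2) unfolding normal_word_def by auto
  then have "shift h w = length w - insert_pos h Ws"
    unfolding shift_def using assms(1) partition_of_concat by force
  with insert_blocks_rev[OF Ws assms(3)] show ?thesis
    using assms(1) unfolding normal_word_def by auto
qed

lemma shift_outside: "fh = Some f \<Longrightarrow> f \<notin> set w \<Longrightarrow> shift h w = 0"
  unfolding shift_def by simp

lemma normal_word_Cons_outside:
  assumes "fh = Some f" "f \<notin> set w"
  shows "normal_word (h # w)"
proof -
  have "word_upto (f # w) = [f]"
    using word_upto_eqI[OF assms(1), of "f # w" "[f]" w] assms(2) by simp
  then show ?thesis using assms stable_blocks_singleton[OF target_flaw[OF assms(1)]]
    unfolding normal_word_def by (auto intro!: exI[of _ "[[f]]"])
qed

lemma shift_past:
  assumes "fh = Some f" "normal_word w" "f \<in> set w" "\<not> conflicts h (word_upto w)"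
  defines "k \<equiv> shift h w"
  shows "k = length (word_upto w)" "take k w = word_upto w"
    "word_upto (insert_at k h w) = word_upto w" "normal_word (insert_at k h w)"
proof -
  obtain rest where w: "w = word_upto w @ rest" "word_upto w \<noteq> []" "last (word_upto w) = f"
    "f \<notin> set rest"
    using word_upto_split[OF assms(1,3)] by blast
  show k: "k = length (word_upto w)" unfolding k_def shift_def using assms(1,3,4) by simp
  show "take k w = word_upto w" using w(1) k by (metis append_eq_conv_conj)
  have "h \<noteq> f" using assms(4) w(2,3) last_in_set by (fastforce simp: conflicts_def conflict_def)
  moreover have "insert_at k h w = word_upto w @ h # rest"
    using k w(1) by (metis append_eq_conv_conj insert_at_def)
  ultimately show upto: "word_upto (insert_at k h w) = word_upto w"
    using word_upto_eqI[OF assms(1)] w(2-4) by simp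
  show "normal_word (insert_at k h w)"
    using assms(1-3) unfolding normal_word_def upto by simp
qed

lemma shift_inside:
  assumes "fh = Some f" "normal_word w" "f \<in> set w" "conflicts h (word_upto w)" "h \<in> F"
  defines "k \<equiv> shift h w"
  shows "k < length (word_upto w)" "take k w = take k (word_upto w)"
    "\<forall>g\<in>set (take k w). \<not> conflict g h"
    "word_upto (insert_at k h w) = insert_at k h (word_upto w)" "normal_word (insert_at k h w)"
proof -
  obtain rest where w: "w = word_upto w @ rest" "word_upto w \<noteq> []" "last (word_upto w) = f"
    "f \<notin> set rest"
    using word_upto_split[OF assms(1,3)] by blast
  obtain Ws where Ws: "stable_blocks Ws" "sorted_blocks Ws" "concat Ws = rev (word_upto w)" "hd Ws = [f]"
    using assms(1-3) unfolding normal_word_def by auto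
  have k: "k = length (word_upto w) - insert_pos h Ws"
    unfolding k_def shift_def using assms(1,3,4) Ws(1,3) partition_of_concat by force
  note ins = insert_blocks_rev[OF Ws(1-3) assms(5), folded k]
  show "k < length (word_upto w)" using ins(6) assms(4) by blast
  then show "take k w = take k (word_upto w)" using w(1) by (metis append_Nil2 diff_is_0_eq
      less_imp_le take_0 take_append)
  then show "\<forall>g\<in>set (take k w). \<not> conflict g h" using ins(2) by simp
  have "insert_at k h w = insert_at k h (word_upto w) @ rest"
    using ins(1) w(1) by (metis insert_at_append)
  moreover have "last (insert_at k h (word_upto w)) = f"
    using \<open>k < length (word_upto w)\<close> w(3) by (simp add: last_insert_at)
  ultimately show upto: "word_upto (insert_at k h w) = insert_at k h (word_upto w)"
    using word_upto_eqI[OF assms(1)] w(4) by simp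
  show "normal_word (insert_at k h w)"
    using assms(1) ins(3-6) assms(4) Ws(4) unfolding normal_word_def upto by auto
qed

lemma shift_props:
  assumes "normal_word w" "h \<in> F"
  shows "shift h w \<le> length w" "\<forall>g\<in>set (take (shift h w) w). \<not> conflict g h"
    "normal_word (insert_at (shift h w) h w)"
proof -
  have "shift h w \<le> length w \<and> (\<forall>g\<in>set (take (shift h w) w). \<not> conflict g h) \<and>
    normal_word (insert_at (shift h w) h w)"
  proof (cases fh)
    case None
    then show ?thesis using shift_None assms by blast
  next
    case (Some f)
    consider (outside) "f \<notin> set w" | (past) "f \<in> set w" "\<not> conflicts h (word_upto w)"
      | (inside) "f \<in> set w" "conflicts h (word_upto w)"
      by blast
    then show ?thesis
    proof cases
      case outside
      then show ?thesis using Some shift_outside normal_word_Cons_outside by simp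
    next
      case past
      then show ?thesis using shift_past[OF Some assms(1) past] length_word_upto_le[of w]
        by (auto simp: conflicts_def)
    next
      case inside
      then show ?thesis using shift_inside[OF Some assms(1) inside assms(2)] length_word_upto_le[of w]
        by simp
    qed
  qed
  then show "shift h w \<le> length w" "\<forall>g\<in>set (take (shift h w) w). \<not> conflict g h"
    "normal_word (insert_at (shift h w) h w)" by blast+
qed

text \<open>The three regimes of shift can be told apart from the new prefix
  word_upto (insert_at (shift h w) h w) alone; this makes the shift recoverable.\<close>

lemma word_upto_insert_regimes:
  assumes "fh = Some f" "normal_word w" "h \<in> F" "f \<in> set (h # w)"
  defines "k \<equiv> shift h w"
  defines "U \<equiv> word_upto (insert_at k h w)"
  shows "h \<notin> set U \<Longrightarrow> f \<in> set w \<and> k = length U \<and> take k w = U \<and> U = word_upto w"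
    "h \<in> set U \<Longrightarrow> length U = 1 \<Longrightarrow> f \<notin> set w"
    "h \<in> set U \<Longrightarrow> length U \<noteq> 1 \<Longrightarrow> f \<in> set w \<and> k < length (word_upto w) \<and>
       take k w = take k (word_upto w) \<and> h \<notin> set (take k w) \<and> U = insert_at k h (word_upto w)"
proof -
  consider (outside) "f \<notin> set w" "k = 0" "U = [h]"
    | (past) "f \<in> set w" "k = length (word_upto w)" "take k w = word_upto w" "U = word_upto w"
        "h \<notin> set (word_upto w)"
    | (inside) "f \<in> set w" "k < length (word_upto w)" "take k w = take k (word_upto w)"
        "h \<notin> set (take k w)" "U = insert_at k h (word_upto w)"
  proof -
    consider "f \<notin> set w" | "f \<in> set w" "\<not> conflicts h (word_upto w)"
      | "f \<in> set w" "conflicts h (word_upto w)"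
      by blast
    then show thesis
    proof cases
      case 1
      then have "word_upto (h # w) = [h]"
        using assms(4) word_upto_eqI[OF assms(1), of "h # w" "[h]" w] by simp
      then show thesis using outside 1 shift_outside[OF assms(1)] unfolding U_def k_def by simp
    next
      case 2
      have "h \<notin> set (word_upto w)" using 2(2) by (auto simp: conflicts_def conflict_def)
      then show thesis using past 2 shift_past[OF assms(1,2) 2] unfolding U_def k_def by simp
    next
      case 3
      note regime = shift_inside[OF assms(1,2) 3 assms(3), folded k_def]
      have "h \<notin> set (take k w)" using regime(3) by (auto simp: conflict_def)
      then show thesis using inside 3 regime unfolding U_def by simp
    qed
  qed
  then show "h \<notin> set U \<Longrightarrow> f \<in> set w \<and> k = length U \<and> take k w = U \<and> U = word_upto w"
    "h \<in> set U \<Longrightarrow> length U = 1 \<Longrightarrow> f \<notin> set w"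
    "h \<in> set U \<Longrightarrow> length U \<noteq> 1 \<Longrightarrow> f \<in> set w \<and> k < length (word_upto w) \<and>
       take k w = take k (word_upto w) \<and> h \<notin> set (take k w) \<and> U = insert_at k h (word_upto w)"
    by (cases; force)+
qed

lemma shift_determined_Some:
  assumes "fh = Some f" "normal_word w1" "normal_word w2" "h \<in> F" "f \<in> set (h # w1)" "f \<in> set (h # w2)"
    and upto: "word_upto (insert_at (shift h w1) h w1) = word_upto (insert_at (shift h w2) h w2)"
  shows "(f \<notin> set w1 \<and> f \<notin> set w2) \<or>
    (shift h w1 = shift h w2 \<and> take (shift h w1) w1 = take (shift h w2) w2 \<and>
     word_upto w1 = word_upto w2 \<and> f \<in> set w1 \<and> f \<in> set w2)"
proof -
  define U where "U = word_upto (insert_at (shift h w1) h w1)"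
  note side1 = word_upto_insert_regimes[OF assms(1,2,4,5), folded U_def]
  note side2 = word_upto_insert_regimes[OF assms(1,3,4,6), folded upto, folded U_def]
  consider "h \<notin> set U" | "h \<in> set U" "length U = 1" | "h \<in> set U" "length U \<noteq> 1" by blast
  then show ?thesis
  proof cases
    case 1
    then show ?thesis using side1(1) side2(1) by auto
  next
    case 2
    then show ?thesis using side1(2) side2(2) by blast
  next
    case 3
    then have "shift h w1 = shift h w2 \<and> word_upto w1 = word_upto w2"
      using side1(3) side2(3) insert_at_inject[of h "shift h w1" "word_upto w1" "shift h w2" "word_upto w2"]
      by auto
    then show ?thesis using 3 side1(3) side2(3) by auto
  qed
qed

lemma shift_determined:
  assumes "normal_word w1" "normal_word w2" "h \<in> F"
    and upto: "word_upto (insert_at (shift h w1) h w1) = word_upto (insert_at (shift h w2) h w2)"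
    and target: "\<forall>f. fh = Some f \<longrightarrow> f \<in> set (h # w1) \<and> f \<in> set (h # w2)"
  shows "(\<exists>f. fh = Some f \<and> f \<notin> set w1 \<and> f \<notin> set w2) \<or>
    (shift h w1 = shift h w2 \<and> take (shift h w1) w1 = take (shift h w2) w2 \<and>
     word_upto w1 = word_upto w2 \<and> (\<forall>f. fh = Some f \<longrightarrow> f \<in> set w1 \<and> f \<in> set w2))"
proof (cases fh)
  case None
  have "h \<notin> set (take (shift h w1) w1)" "h \<notin> set (take (shift h w2) w2)"
    using shift_props(2)[OF assms(1,3)] shift_props(2)[OF assms(2,3)] by (auto simp: conflict_def)
  then have "shift h w1 = shift h w2 \<and> w1 = w2"
    using insert_at_inject shift_props(1) assms(1-3) upto word_upto_None[OF None] by metis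
  then show ?thesis using None by simp
next
  case (Some f)
  then show ?thesis using shift_determined_Some[OF Some assms(1-3) _ _ upto] target by auto
qed

end

section \<open>Normalizing walks by swaps\<close>

locale swap_normalization = normal_form F sim \<pi> fh
  for F :: "'a set set" and sim \<pi> fh +
  fixes \<Omega> :: "'a set" and \<rho> :: "'a set \<Rightarrow> 'a \<Rightarrow> 'a \<Rightarrow> real" and SWAP :: "'a walk \<Rightarrow> 'a walk"
  assumes swap: "swap_map \<Omega> F \<rho> sim SWAP"
begin

lemma swap_step:
  assumes "step \<Omega> F \<rho> \<sigma> h s" "step \<Omega> F \<rho> s g t" "\<not> sim h g"
  obtains a where "SWAP (\<sigma>, [(h, s), (g, t)]) = (\<sigma>, [(g, a), (h, t)])"
    "step \<Omega> F \<rho> \<sigma> g a" "step \<Omega> F \<rho> a h t"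
  using swap assms unfolding swap_map_def by blast

lemma swap_inj:
  assumes "step \<Omega> F \<rho> \<sigma> h s1" "step \<Omega> F \<rho> s1 g t1" "step \<Omega> F \<rho> \<sigma> h s2" "step \<Omega> F \<rho> s2 g t2"
    "\<not> sim h g" "SWAP (\<sigma>, [(h, s1), (g, t1)]) = SWAP (\<sigma>, [(h, s2), (g, t2)])"
  shows "s1 = s2 \<and> t1 = t2"
  using swap assms unfolding swap_map_def inj_on_def by blast

definition swaps_to :: "'a \<Rightarrow> ('a set \<times> 'a) list \<Rightarrow> ('a set \<times> 'a) list \<Rightarrow> bool" where
  "swaps_to \<sigma> xs ys \<longleftrightarrow> (\<forall>\<sigma>0 pre. \<sigma>0 \<in> \<Omega> \<longrightarrow> walk_from \<Omega> F \<rho> \<sigma>0 pre \<longrightarrow> last (\<sigma>0 # map snd pre) = \<sigma> \<longrightarrow>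
     (valid_swap \<Omega> F \<rho> sim SWAP)\<^sup>*\<^sup>* (\<sigma>0, pre @ xs) (\<sigma>0, pre @ ys))"

lemma swaps_to_refl: "swaps_to \<sigma> xs xs"
  unfolding swaps_to_def by simp

lemma swaps_toD:
  "swaps_to \<sigma> xs ys \<Longrightarrow> \<sigma>0 \<in> \<Omega> \<Longrightarrow> walk_from \<Omega> F \<rho> \<sigma>0 pre \<Longrightarrow> last (\<sigma>0 # map snd pre) = \<sigma> \<Longrightarrow>
   (valid_swap \<Omega> F \<rho> sim SWAP)\<^sup>*\<^sup>* (\<sigma>0, pre @ xs) (\<sigma>0, pre @ ys)"
  unfolding swaps_to_def by blast

lemma swaps_to_trans: "swaps_to \<sigma> xs ys \<Longrightarrow> swaps_to \<sigma> ys zs \<Longrightarrow> swaps_to \<sigma> xs zs"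
  by (subst swaps_to_def) (blast dest: swaps_toD intro: rtranclp_trans)

lemma swaps_to_Cons:
  assumes "step \<Omega> F \<rho> \<sigma> h s" "swaps_to s xs ys"
  shows "swaps_to \<sigma> ((h, s) # xs) ((h, s) # ys)"
  unfolding swaps_to_def
proof (intro allI impI)
  fix \<sigma>0 pre assume "\<sigma>0 \<in> \<Omega>" "walk_from \<Omega> F \<rho> \<sigma>0 pre" "last (\<sigma>0 # map snd pre) = \<sigma>"
  then have "walk_from \<Omega> F \<rho> \<sigma>0 (pre @ [(h, s)])" "last (\<sigma>0 # map snd (pre @ [(h, s)])) = s"
    using assms(1) by (simp_all add: walk_from_append)
  then show "(valid_swap \<Omega> F \<rho> sim SWAP)\<^sup>*\<^sup>* (\<sigma>0, pre @ (h, s) # xs) (\<sigma>0, pre @ (h, s) # ys)"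
    using swaps_toD[OF assms(2) \<open>\<sigma>0 \<in> \<Omega>\<close>, of "pre @ [(h, s)]"] by simp
qed

lemma swaps_to_swap:
  assumes "step \<Omega> F \<rho> \<sigma> h s" "step \<Omega> F \<rho> s g t" "walk_from \<Omega> F \<rho> t rest" "\<not> conflict g h"
    and "SWAP (\<sigma>, [(h, s), (g, t)]) = (\<sigma>, [(g, a), (h, t)])"
  shows "swaps_to \<sigma> ((h, s) # (g, t) # rest) ((g, a) # (h, t) # rest)"
  unfolding swaps_to_def
proof (intro allI impI)
  fix \<sigma>0 pre assume "\<sigma>0 \<in> \<Omega>" "walk_from \<Omega> F \<rho> \<sigma>0 pre" "last (\<sigma>0 # map snd pre) = \<sigma>"
  then have "is_walk \<Omega> F \<rho> (\<sigma>0, pre @ [(h, s), (g, t)] @ rest)"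
    using assms(1-3) unfolding is_walk_def by (simp add: walk_from_append)
  moreover have "snd (SWAP (last_state (\<sigma>0, pre), [(h, s), (g, t)])) = [(g, a), (h, t)]"
    using assms(5) \<open>last (\<sigma>0 # map snd pre) = \<sigma>\<close> by (simp add: last_state_def)
  ultimately have "valid_swap \<Omega> F \<rho> sim SWAP (\<sigma>0, pre @ [(h, s), (g, t)] @ rest)
      (\<sigma>0, pre @ [(g, a), (h, t)] @ rest)"
    using assms(4) unfolding valid_swap_def not_conflict_iff
    by (intro conjI exI[of _ \<sigma>0] exI[of _ pre] exI[of _ h] exI[of _ s] exI[of _ g] exI[of _ t] exI[of _ rest])
      simp_all
  then show "(valid_swap \<Omega> F \<rho> sim SWAP)\<^sup>*\<^sup>* (\<sigma>0, pre @ (h, s) # (g, t) # rest)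
      (\<sigma>0, pre @ (g, a) # (h, t) # rest)" by simp
qed

fun bubble :: "nat \<Rightarrow> 'a \<Rightarrow> ('a set \<times> 'a) list \<Rightarrow> ('a set \<times> 'a) list" where
  "bubble (Suc k) \<sigma> (x # y # rest) =
     (let ys = snd (SWAP (\<sigma>, [x, y])) in hd ys # bubble k (snd (hd ys)) (ys ! 1 # rest))"
| "bubble _ _ xs = xs"

lemma bubble_Suc:
  assumes "SWAP (\<sigma>, [(h, s), (g, t)]) = (\<sigma>, [(g, a), (h, t)])"
  shows "bubble (Suc k) \<sigma> ((h, s) # (g, t) # rest) = (g, a) # bubble k a ((h, t) # rest)"
  using assms by simp

lemma bubble_props:
  assumes "walk_from \<Omega> F \<rho> \<sigma> ((h, s) # zs)" "k \<le> length zs"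
    "\<forall>g\<in>set (take k (map fst zs)). \<not> conflict g h"
  shows "walk_from \<Omega> F \<rho> \<sigma> (bubble k \<sigma> ((h, s) # zs)) \<and>
    map fst (bubble k \<sigma> ((h, s) # zs)) = insert_at k h (map fst zs) \<and>
    drop (Suc k) (bubble k \<sigma> ((h, s) # zs)) = drop k zs \<and>
    swaps_to \<sigma> ((h, s) # zs) (bubble k \<sigma> ((h, s) # zs))"
  using assms
proof (induction k arbitrary: \<sigma> s zs)
  case 0
  then show ?case by (simp add: swaps_to_refl)
next
  case (Suc k)
  obtain g t zs' where zs: "zs = (g, t) # zs'" using Suc.prems(2) by (cases zs) auto
  have steps: "step \<Omega> F \<rho> \<sigma> h s" "step \<Omega> F \<rho> s g t" "walk_from \<Omega> F \<rho> t zs'"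
    using Suc.prems(1) zs by auto
  have gh: "\<not> conflict g h" using Suc.prems(3) zs by simp
  obtain a where a: "SWAP (\<sigma>, [(h, s), (g, t)]) = (\<sigma>, [(g, a), (h, t)])"
      "step \<Omega> F \<rho> \<sigma> g a" "step \<Omega> F \<rho> a h t"
    using swap_step[OF steps(1,2)] gh by (auto simp: not_conflict_iff)
  have IH: "walk_from \<Omega> F \<rho> a (bubble k a ((h, t) # zs')) \<and>
      map fst (bubble k a ((h, t) # zs')) = insert_at k h (map fst zs') \<and>
      drop (Suc k) (bubble k a ((h, t) # zs')) = drop k zs' \<and>
      swaps_to a ((h, t) # zs') (bubble k a ((h, t) # zs'))"
    using Suc.IH[of a t zs'] Suc.prems(2,3) a(3) steps(3) zs by simp
  have "swaps_to \<sigma> ((h, s) # zs) ((g, a) # (h, t) # zs')"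
    using swaps_to_swap[OF steps gh a(1)] zs by simp
  moreover have "swaps_to \<sigma> ((g, a) # (h, t) # zs') ((g, a) # bubble k a ((h, t) # zs'))"
    using swaps_to_Cons a(2) IH by blast
  ultimately show ?case
    using IH a(2) bubble_Suc[OF a(1)] zs by (auto intro: swaps_to_trans)
qed

lemma bubble_prefix_inj:
  assumes "walk_from \<Omega> F \<rho> \<sigma> ((h, s1) # P1)" "walk_from \<Omega> F \<rho> \<sigma> ((h, s2) # P2)"
    "k \<le> length P1" "k \<le> length P2" "take k (map fst P1) = take k (map fst P2)"
    "\<forall>g\<in>set (take k (map fst P1)). \<not> conflict g h"
    "take j (bubble k \<sigma> ((h, s1) # P1)) = take j (bubble k \<sigma> ((h, s2) # P2))" "k < j"
  shows "s1 = s2 \<and> take (j - 1) P1 = take (j - 1) P2"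
  using assms
proof (induction k arbitrary: \<sigma> s1 s2 P1 P2 j)
  case 0
  then show ?case by (cases j) auto
next
  case (Suc k)
  obtain g t1 R1 where P1: "P1 = (g, t1) # R1" using Suc.prems(3) by (cases P1) auto
  obtain t2 R2 where P2: "P2 = (g, t2) # R2" using Suc.prems(4,5) P1 by (cases P2) auto
  have steps1: "step \<Omega> F \<rho> \<sigma> h s1" "step \<Omega> F \<rho> s1 g t1" "walk_from \<Omega> F \<rho> t1 R1"
    using Suc.prems(1) P1 by auto
  have steps2: "step \<Omega> F \<rho> \<sigma> h s2" "step \<Omega> F \<rho> s2 g t2" "walk_from \<Omega> F \<rho> t2 R2"
    using Suc.prems(2) P2 by auto
  have hg: "\<not> sim h g" using Suc.prems(6) P1 by (simp add: not_conflict_iff)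
  obtain a1 where a1: "SWAP (\<sigma>, [(h, s1), (g, t1)]) = (\<sigma>, [(g, a1), (h, t1)])" "step \<Omega> F \<rho> a1 h t1"
    using swap_step[OF steps1(1,2) hg] by blast
  obtain a2 where a2: "SWAP (\<sigma>, [(h, s2), (g, t2)]) = (\<sigma>, [(g, a2), (h, t2)])" "step \<Omega> F \<rho> a2 h t2"
    using swap_step[OF steps2(1,2) hg] by blast
  obtain j' where j: "j = Suc j'" using Suc.prems(8) by (cases j) auto
  have "a1 = a2" and tj: "take j' (bubble k a1 ((h, t1) # R1)) = take j' (bubble k a1 ((h, t2) # R2))"
    using Suc.prems(7) bubble_Suc[OF a1(1)] bubble_Suc[OF a2(1)] P1 P2 j by auto
  have IH: "t1 = t2 \<and> take (j' - 1) R1 = take (j' - 1) R2"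
    using Suc.IH[OF _ _ _ _ _ _ tj] a1(2) a2(2) steps1(3) steps2(3) \<open>a1 = a2\<close> Suc.prems(3-6,8) P1 P2 j
    by simp
  then have "s1 = s2" using swap_inj[OF steps1(1,2) steps2(1,2) hg] a1(1) a2(1) \<open>a1 = a2\<close> by simp
  moreover have "take (j - 1) P1 = take (j - 1) P2"
    using IH P1 P2 j Suc.prems(8) by (cases j') auto
  ultimately show ?case by blast
qed

lemma bubble_same_choices:
  assumes "walk_from \<Omega> F \<rho> \<sigma> ((h, s1) # P1)" "walk_from \<Omega> F \<rho> \<sigma> ((h, s2) # P2)"
    "k \<le> length P1" "k \<le> length P2" "take k (map fst P1) = take k (map fst P2)"
    "\<forall>g\<in>set (take k (map fst P1)). \<not> conflict g h"
    and tails: "s1 = s2 \<Longrightarrow> same_choices P1 P2"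
  shows "same_choices (bubble k \<sigma> ((h, s1) # P1)) (bubble k \<sigma> ((h, s2) # P2))"
  unfolding same_choices_def
proof (intro allI impI)
  let ?A = "bubble k \<sigma> ((h, s1) # P1)" and ?B = "bubble k \<sigma> ((h, s2) # P2)"
  note A = bubble_props[OF assms(1,3,6)] and B = bubble_props[OF assms(2,4) assms(6)[unfolded assms(5)]]
  have len: "length ?A = Suc (length P1)" "length ?B = Suc (length P2)"
    using A B by (metis length_insert_at length_map)+
  fix j assume j: "take j ?A = take j ?B"
  show "(j < length ?A \<longleftrightarrow> j < length ?B) \<and> (j < length ?A \<longrightarrow> fst (?A ! j) = fst (?B ! j))"
  proof (cases "j \<le> k")
    case True
    then have jA: "j < length ?A" and jB: "j < length ?B" using assms(3,4) len by linarith+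
    have "fst (?A ! j) = insert_at k h (map fst P1) ! j" using A jA by (metis nth_map)
    also have "\<dots> = (take k (map fst P2) @ [h]) ! j"
      using nth_insert_at_le[OF True, of "map fst P1" h] assms(3,5) by simp
    also have "\<dots> = insert_at k h (map fst P2) ! j" using nth_insert_at_le[OF True, of "map fst P2" h] assms(4) by simp
    also have "\<dots> = fst (?B ! j)" using B jB by (metis nth_map)
    finally show ?thesis using jA jB by blast
  next
    case False
    then have "s1 = s2" and tj: "take (j - 1) P1 = take (j - 1) P2"
      using bubble_prefix_inj[OF assms(1-6) j] by auto
    have "j - 1 < length P1 \<longleftrightarrow> j - 1 < length P2"
      and flaw: "j - 1 < length P1 \<Longrightarrow> fst (P1 ! (j - 1)) = fst (P2 ! (j - 1))"
      using tails[OF \<open>s1 = s2\<close>] tj unfolding same_choices_def by blast+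
    moreover have "j < length ?A \<longleftrightarrow> j - 1 < length P1" "j < length ?B \<longleftrightarrow> j - 1 < length P2"
      using len False by auto
    moreover have "?A ! j = P1 ! (j - 1)" if "j < length ?A"
      using nth_via_drop[of k ?A P1 j] A that False by simp
    moreover have "?B ! j = P2 ! (j - 1)" if "j < length ?B"
      using nth_via_drop[of k ?B P2 j] B that False by simp
    ultimately show ?thesis by auto
  qed
qed

lemma bubble_inj:
  assumes "walk_from \<Omega> F \<rho> \<sigma> ((h, s1) # P1)" "walk_from \<Omega> F \<rho> \<sigma> ((h, s2) # P2)"
    "k \<le> length P1" "k \<le> length P2" "take k (map fst P1) = take k (map fst P2)"
    "\<forall>g\<in>set (take k (map fst P1)). \<not> conflict g h"
    "bubble k \<sigma> ((h, s1) # P1) = bubble k \<sigma> ((h, s2) # P2)"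
  shows "s1 = s2 \<and> P1 = P2"
proof -
  let ?A = "bubble k \<sigma> ((h, s1) # P1)" and ?B = "bubble k \<sigma> ((h, s2) # P2)"
  have len: "length ?A = Suc (length P1)" "length ?B = Suc (length P2)"
    using bubble_props[OF assms(1,3,6)] bubble_props[OF assms(2,4) assms(6)[unfolded assms(5)]]
    by (metis length_insert_at length_map)+
  then have "length P1 = length P2" "k < length ?A" using assms(3,7) by simp_all
  then show ?thesis
    using bubble_prefix_inj[OF assms(1-6), of "length ?A"] assms(7) len(1) by simp
qed

fun normalize :: "'a \<Rightarrow> ('a set \<times> 'a) list \<Rightarrow> ('a set \<times> 'a) list" where
  "normalize \<sigma> [] = []"
| "normalize \<sigma> ((h, s) # ys) = bubble (shift h (map fst (normalize s ys))) \<sigma> ((h, s) # normalize s ys)"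

lemma normalize_props:
  assumes "walk_from \<Omega> F \<rho> \<sigma> xs"
  shows "walk_from \<Omega> F \<rho> \<sigma> (normalize \<sigma> xs) \<and> length (normalize \<sigma> xs) = length xs \<and>
    set (map fst (normalize \<sigma> xs)) = set (map fst xs) \<and> normal_word (map fst (normalize \<sigma> xs)) \<and>
    swaps_to \<sigma> xs (normalize \<sigma> xs)"
  using assms
proof (induction xs arbitrary: \<sigma>)
  case Nil
  then show ?case by (simp add: normal_word_Nil swaps_to_refl)
next
  case (Cons x ys)
  obtain h s where x: "x = (h, s)" by (cases x)
  have step: "step \<Omega> F \<rho> \<sigma> h s" and walk: "walk_from \<Omega> F \<rho> s ys" using Cons.prems x by auto
  define P where "P = normalize s ys"
  define k where "k = shift h (map fst P)"
  note IH = Cons.IH[OF walk, folded P_def]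
  note sh = shift_props[of "map fst P" h, folded k_def]
  have hF: "h \<in> F" using step by (rule step_flaw)
  have "walk_from \<Omega> F \<rho> \<sigma> ((h, s) # P)" using step IH by simp
  note B = bubble_props[OF this, of k] sh[OF _ hF] IH
  have "swaps_to \<sigma> ((h, s) # ys) ((h, s) # P)" using swaps_to_Cons step IH by blast
  then have "swaps_to \<sigma> ((h, s) # ys) (bubble k \<sigma> ((h, s) # P))"
    using B by (auto intro: swaps_to_trans)
  moreover have "normalize \<sigma> (x # ys) = bubble k \<sigma> ((h, s) # P)" unfolding x P_def k_def by simp
  moreover have "length (bubble k \<sigma> ((h, s) # P)) = Suc (length P)"
    using B by (metis length_insert_at length_map)
  ultimately show ?case using B x by simp
qed

lemma normalize_outside:
  assumes "fh = Some f" "f \<notin> set (map fst xs)"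
  shows "normalize \<sigma> xs = xs"
  using assms(2)
proof (induction xs arbitrary: \<sigma>)
  case (Cons x ys)
  obtain h s where x: "x = (h, s)" by (cases x)
  then have "normalize s ys = ys" "f \<notin> set (map fst ys)" using Cons by auto
  then show ?case using x shift_outside[OF assms(1)] by simp
qed simp

definition has_target :: "('a set \<times> 'a) list \<Rightarrow> bool" where
  "has_target xs \<longleftrightarrow> (\<forall>f. fh = Some f \<longrightarrow> f \<in> set (map fst xs))"

lemma normalize_Cons:
  assumes "walk_from \<Omega> F \<rho> \<sigma> ((h, s) # ys)"
  defines "P \<equiv> normalize s ys"
  defines "k \<equiv> shift h (map fst P)"
  shows "normalize \<sigma> ((h, s) # ys) = bubble k \<sigma> ((h, s) # P)"
    "walk_from \<Omega> F \<rho> \<sigma> ((h, s) # P)" "k \<le> length P"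
    "\<forall>g\<in>set (take k (map fst P)). \<not> conflict g h"
    "map fst (normalize \<sigma> ((h, s) # ys)) = insert_at k h (map fst P)"
proof -
  have step: "step \<Omega> F \<rho> \<sigma> h s" "walk_from \<Omega> F \<rho> s ys" using assms(1) by auto
  note N = normalize_props[OF step(2), folded P_def]
  show norm: "normalize \<sigma> ((h, s) # ys) = bubble k \<sigma> ((h, s) # P)" unfolding k_def P_def by simp
  show walk: "walk_from \<Omega> F \<rho> \<sigma> ((h, s) # P)" using step N by simp
  have "normal_word (map fst P)" "h \<in> F" using N step_flaw[OF step(1)] by auto
  from shift_props[OF this, folded k_def] N
  show "k \<le> length P" "\<forall>g\<in>set (take k (map fst P)). \<not> conflict g h" by simp_all
  then show "map fst (normalize \<sigma> ((h, s) # ys)) = insert_at k h (map fst P)"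
    using bubble_props[OF walk] norm by simp
qed

lemma normalize_Cons_cases:
  assumes "walk_from \<Omega> F \<rho> \<sigma> ((h, s1) # ys1)" "walk_from \<Omega> F \<rho> \<sigma> ((h, s2) # ys2)"
    "has_target ((h, s1) # ys1)" "has_target ((h, s2) # ys2)"
    "word_upto (map fst (normalize \<sigma> ((h, s1) # ys1))) = word_upto (map fst (normalize \<sigma> ((h, s2) # ys2)))"
  defines "P1 \<equiv> normalize s1 ys1" and "P2 \<equiv> normalize s2 ys2"
  obtains (outside) "normalize \<sigma> ((h, s1) # ys1) = (h, s1) # ys1" "normalize \<sigma> ((h, s2) # ys2) = (h, s2) # ys2"
  | (inside) "shift h (map fst P1) = shift h (map fst P2)"
      "take (shift h (map fst P1)) (map fst P1) = take (shift h (map fst P1)) (map fst P2)"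
      "word_upto (map fst P1) = word_upto (map fst P2)" "has_target ys1" "has_target ys2"
proof -
  have N1: "walk_from \<Omega> F \<rho> s1 P1 \<and> set (map fst P1) = set (map fst ys1) \<and> normal_word (map fst P1)"
    and N2: "walk_from \<Omega> F \<rho> s2 P2 \<and> set (map fst P2) = set (map fst ys2) \<and> normal_word (map fst P2)"
    using assms(1,2) normalize_props unfolding P1_def P2_def by auto
  have hF: "h \<in> F" using assms(1) step_flaw by auto
  have upto: "word_upto (insert_at (shift h (map fst P1)) h (map fst P1)) =
      word_upto (insert_at (shift h (map fst P2)) h (map fst P2))"
    using assms(5) normalize_Cons(5)[OF assms(1)] normalize_Cons(5)[OF assms(2)]
    unfolding P1_def P2_def by simp
  have target: "\<forall>f. fh = Some f \<longrightarrow> f \<in> set (h # map fst P1) \<and> f \<in> set (h # map fst P2)"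
    using assms(3,4) N1 N2 unfolding has_target_def by simp
  have "normal_word (map fst P1)" "normal_word (map fst P2)" using N1 N2 by blast+
  from shift_determined[OF this hF upto target] show ?thesis
  proof (elim disjE exE conjE)
    fix f assume f: "fh = Some f" "f \<notin> set (map fst P1)" "f \<notin> set (map fst P2)"
    have "normalize \<sigma> ((h, si) # ysi) = (h, si) # ysi" if "f \<notin> set (map fst ysi)" for si ysi
      using normalize_outside[OF f(1) that] shift_outside[OF f(1)] that by simp
    then show ?thesis using outside f(2,3) N1 N2 by simp
  next
    assume "shift h (map fst P1) = shift h (map fst P2)"
      "take (shift h (map fst P1)) (map fst P1) = take (shift h (map fst P2)) (map fst P2)"
      "word_upto (map fst P1) = word_upto (map fst P2)"
      "\<forall>f. fh = Some f \<longrightarrow> f \<in> set (map fst P1) \<and> f \<in> set (map fst P2)"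
    then show ?thesis using inside N1 N2 unfolding has_target_def by simp
  qed
qed

lemma normalize_same_choices:
  assumes "walk_from \<Omega> F \<rho> \<sigma> xs1" "walk_from \<Omega> F \<rho> \<sigma> xs2" "same_choices xs1 xs2"
    "has_target xs1" "has_target xs2"
    "word_upto (map fst (normalize \<sigma> xs1)) = word_upto (map fst (normalize \<sigma> xs2))"
  shows "same_choices (normalize \<sigma> xs1) (normalize \<sigma> xs2) \<and>
    (normalize \<sigma> xs1 = normalize \<sigma> xs2 \<longrightarrow> xs1 = xs2)"
  using assms
proof (induction xs1 arbitrary: \<sigma> xs2)
  case Nil
  then have "fh = None" unfolding has_target_def by (cases fh) auto
  then have "map fst (normalize \<sigma> xs2) = []"
    using Nil.prems(6) by (metis word_upto_None normalize.simps(1) list.map(1))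
  then have "xs2 = []" using normalize_props[OF Nil.prems(2)] by auto
  then show ?case by (simp add: same_choices_def)
next
  case (Cons x1 ys1)
  obtain h s1 where x1: "x1 = (h, s1)" by (cases x1)
  have "0 < length xs2 \<and> fst (xs2 ! 0) = h"
    using Cons.prems(3)[unfolded same_choices_def, rule_format, of 0] x1 by simp
  then obtain s2 ys2 where xs2: "xs2 = (h, s2) # ys2" by (cases xs2) auto
  note walks = Cons.prems(1,2)[unfolded x1 xs2]
  show ?case
  proof (cases rule: normalize_Cons_cases[OF walks Cons.prems(4-6)[unfolded x1 xs2], case_names outside inside])
    case outside
    then show ?thesis using Cons.prems(3) x1 xs2 by simp
  next
    case inside
    define P1 P2 where "P1 = normalize s1 ys1" and "P2 = normalize s2 ys2"
    define k where "k = shift h (map fst P1)"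
    note C1 = normalize_Cons[OF walks(1), folded P1_def k_def]
    note C2 = normalize_Cons[OF walks(2), folded P2_def, folded inside(1)[folded P1_def P2_def k_def]]
    have IH: "same_choices P1 P2 \<and> (P1 = P2 \<longrightarrow> ys1 = ys2)" if "s1 = s2"
      using Cons.IH[of s1 ys2] walks same_choices_Cons[of x1 ys1 ys2] Cons.prems(3)
        inside(3-5) that x1 xs2 unfolding P1_def P2_def by auto
    have take: "take k (map fst P1) = take k (map fst P2)" using inside(2) unfolding k_def P1_def P2_def .
    have "same_choices (bubble k \<sigma> ((h, s1) # P1)) (bubble k \<sigma> ((h, s2) # P2))"
      using bubble_same_choices[OF C1(2) C2(2) C1(3) C2(3) take C1(4)] IH by blast
    moreover have "s1 = s2 \<and> P1 = P2" if "bubble k \<sigma> ((h, s1) # P1) = bubble k \<sigma> ((h, s2) # P2)"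
      using bubble_inj[OF C1(2) C2(2) C1(3) C2(3) take C1(4) that] .
    ultimately show ?thesis using IH C1(1) C2(1) x1 xs2 by auto
  qed
qed

definition normalize_walk :: "'a walk \<Rightarrow> 'a walk" where
  "normalize_walk \<tau> = (fst \<tau>, normalize (fst \<tau>) (snd \<tau>))"

lemma normalize_walk_swaps:
  assumes "is_walk \<Omega> F \<rho> \<tau>"
  shows "is_walk \<Omega> F \<rho> (normalize_walk \<tau>) \<and> (valid_swap \<Omega> F \<rho> sim SWAP)\<^sup>*\<^sup>* \<tau> (normalize_walk \<tau>)"
proof -
  have "walk_from \<Omega> F \<rho> (fst \<tau>) (snd \<tau>)" "fst \<tau> \<in> \<Omega>" using assms unfolding is_walk_def by auto
  with normalize_props swaps_toD[of "fst \<tau>" "snd \<tau>" _ "fst \<tau>" "[]"] show ?thesis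
    unfolding normalize_walk_def is_walk_def by simp
qed

lemma normalize_walk_stable:
  assumes "is_walk \<Omega> F \<rho> \<tau>" "contains fh \<tau>"
  shows "rev (W_upto fh (normalize_walk \<tau>)) \<in> Stab \<Omega> F \<rho> sim \<pi>"
    "fh = Some f \<Longrightarrow> R_W F sim (rev (W_upto fh (normalize_walk \<tau>))) = {f}"
proof -
  define P where "P = normalize (fst \<tau>) (snd \<tau>)"
  define u where "u = word_upto (map fst P)"
  have walk: "walk_from \<Omega> F \<rho> (fst \<tau>) (snd \<tau>)" "fst \<tau> \<in> \<Omega>" using assms(1) unfolding is_walk_def by auto
  note N = normalize_props[OF walk(1), folded P_def]
  have upto: "W_upto fh (normalize_walk \<tau>) = u"
    unfolding W_upto_eq_word_upto normalize_walk_def word_def u_def P_def by simp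
  have "is_walk \<Omega> F \<rho> (fst \<tau>, take (length u) P)"
    using N walk(2) walk_from_append[of _ _ _ _ "take (length u) P" "drop (length u) P"]
    unfolding is_walk_def by simp
  moreover have "word (fst \<tau>, take (length u) P) = rev (rev u)"
    using word_upto_prefix[of "map fst P"] unfolding word_def u_def by (simp add: take_map)
  moreover have "pi_stable F sim \<pi> (rev u) \<and> (fh = Some f \<longrightarrow> R_W F sim (rev u) = {f})"
  proof (cases fh)
    case None
    then have "u = [] \<or> (\<exists>Ws. stable_blocks Ws \<and> sorted_blocks Ws \<and> concat Ws = rev u)"
      using N word_upto_None[OF None] unfolding u_def normal_word_def by auto
    then have "pi_stable F sim \<pi> (rev u)"
      by (metis pi_stable_concat pi_stable_def rev.simps(1))
    then show ?thesis using None by simp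
  next
    case (Some f')
    then have "f' \<in> set (map fst P)" using assms(2) N unfolding contains_def word_def by simp
    then obtain Ws where "stable_blocks Ws" "sorted_blocks Ws" "concat Ws = rev u" "hd Ws = [f']"
      using N Some unfolding normal_word_def u_def by auto
    then show ?thesis using pi_stable_concat R_W_concat Some by fastforce
  qed
  ultimately show "rev (W_upto fh (normalize_walk \<tau>)) \<in> Stab \<Omega> F \<rho> sim \<pi>"
    "fh = Some f \<Longrightarrow> R_W F sim (rev (W_upto fh (normalize_walk \<tau>))) = {f}"
    unfolding upto Stab_def by blast+
qed

lemma has_target_iff_contains: "has_target (snd \<tau>) \<longleftrightarrow> contains fh \<tau>"
  unfolding has_target_def contains_def word_def by (cases fh) auto

lemma normalize_walk_same_choices:
  assumes "valid_set \<Omega> F \<rho> X" "\<forall>\<tau>\<in>X. contains fh \<tau>" "\<tau>1 \<in> X" "\<tau>2 \<in> X" "fst \<tau>1 = fst \<tau>2"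
    "W_upto fh (normalize_walk \<tau>1) = W_upto fh (normalize_walk \<tau>2)"
  shows "same_choices (snd (normalize_walk \<tau>1)) (snd (normalize_walk \<tau>2)) \<and>
    (normalize_walk \<tau>1 = normalize_walk \<tau>2 \<longrightarrow> \<tau>1 = \<tau>2)"
proof -
  have "walk_from \<Omega> F \<rho> (fst \<tau>1) (snd \<tau>1)" "walk_from \<Omega> F \<rho> (fst \<tau>1) (snd \<tau>2)"
    using assms(1,3-5) unfolding valid_set_def is_walk_def by auto
  moreover have "same_choices (snd \<tau>1) (snd \<tau>2)"
    using same_choices_if_valid_set[OF assms(1)] assms(3-5) unfolding same_choices_on_def by blast
  moreover have "has_target (snd \<tau>1)" "has_target (snd \<tau>2)"
    using assms(2-4) has_target_iff_contains by blast+
  ultimately show ?thesis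
    using normalize_same_choices assms(5,6)
    unfolding normalize_walk_def W_upto_eq_word_upto word_def by (simp add: prod_eq_iff)
qed

lemma inj_on_normalize_walk:
  assumes "valid_set \<Omega> F \<rho> X" "\<forall>\<tau>\<in>X. contains fh \<tau>"
  shows "inj_on normalize_walk X"
proof (rule inj_onI)
  fix \<tau>1 \<tau>2 assume "\<tau>1 \<in> X" "\<tau>2 \<in> X" "normalize_walk \<tau>1 = normalize_walk \<tau>2"
  moreover from this have "fst \<tau>1 = fst \<tau>2" unfolding normalize_walk_def by simp
  ultimately show "\<tau>1 = \<tau>2" using normalize_walk_same_choices[OF assms] by metis
qed

lemma valid_set_normalize_walk_fibre:
  assumes "valid_set \<Omega> F \<rho> X" "\<forall>\<tau>\<in>X. contains fh \<tau>"
  shows "valid_set \<Omega> F \<rho> {\<tau> \<in> normalize_walk ` X. rev (W_upto fh \<tau>) = W}"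
proof (rule valid_set_if_same_choices)
  show "\<forall>\<tau>\<in>{\<tau> \<in> normalize_walk ` X. rev (W_upto fh \<tau>) = W}. is_walk \<Omega> F \<rho> \<tau>"
    using assms(1) normalize_walk_swaps unfolding valid_set_def by blast
  show "same_choices_on {\<tau> \<in> normalize_walk ` X. rev (W_upto fh \<tau>) = W}"
    unfolding same_choices_on_def
  proof (intro ballI impI)
    fix \<tau>1' \<tau>2'
    assume "\<tau>1' \<in> {\<tau> \<in> normalize_walk ` X. rev (W_upto fh \<tau>) = W}"
      "\<tau>2' \<in> {\<tau> \<in> normalize_walk ` X. rev (W_upto fh \<tau>) = W}" "fst \<tau>1' = fst \<tau>2'"
    then obtain \<tau>1 \<tau>2 where \<tau>: "\<tau>1 \<in> X" "\<tau>2 \<in> X" "\<tau>1' = normalize_walk \<tau>1" "\<tau>2' = normalize_walk \<tau>2"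
      and "rev (W_upto fh \<tau>1') = W" "rev (W_upto fh \<tau>2') = W"
      by blast
    moreover from this have "fst \<tau>1 = fst \<tau>2" "W_upto fh \<tau>1' = W_upto fh \<tau>2'"
      using \<open>fst \<tau>1' = fst \<tau>2'\<close> unfolding normalize_walk_def by auto
    ultimately show "same_choices (snd \<tau>1') (snd \<tau>2')"
      using normalize_walk_same_choices[OF assms \<tau>(1,2)] by simp
  qed
qed

end

theorem theorem5:
  fixes \<Omega> :: "'a set" and F :: "'a set set" and \<rho> :: "'a set \<Rightarrow> 'a \<Rightarrow> 'a \<Rightarrow> real"
    and sim :: "'a set \<Rightarrow> 'a set \<Rightarrow> bool" and SWAP :: "'a walk \<Rightarrow> 'a walk"
    and \<pi> :: "'a set \<Rightarrow> nat" and fh :: "'a set option" and X :: "'a walk set"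
  assumes "setting \<Omega> F \<rho> sim"
    and "swap_map \<Omega> F \<rho> sim SWAP"
    and "bij_betw \<pi> F {..<card F}"
    and "\<forall>f. fh = Some f \<longrightarrow> f \<in> F"
    and "valid_set \<Omega> F \<rho> X"
    and "\<forall>\<tau>\<in>X. contains fh \<tau>"
  shows "\<exists>X\<pi> \<Phi>. bij_betw \<Phi> X X\<pi> \<and> swapping_mapping \<Omega> F \<rho> sim SWAP X \<Phi> \<and>
     (\<forall>\<tau>\<in>X\<pi>. rev (W_upto fh \<tau>) \<in> Stab \<Omega> F \<rho> sim \<pi> \<and>
        (\<forall>f. fh = Some f \<longrightarrow> R_W F sim (rev (W_upto fh \<tau>)) = {f})) \<and>
     (\<forall>W. valid_set \<Omega> F \<rho> {\<tau>\<in>X\<pi>. rev (W_upto fh \<tau>) = W})"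
proof -
  interpret swap_normalization F sim \<pi> fh \<Omega> \<rho> SWAP
    using assms(1-4) by unfold_locales (auto simp: setting_def bij_betw_def)
  have walks: "\<forall>\<tau>\<in>X. is_walk \<Omega> F \<rho> \<tau>" using assms(5) unfolding valid_set_def by blast
  show ?thesis
  proof (intro exI conjI)
    show "bij_betw normalize_walk X (normalize_walk ` X)"
      using inj_on_normalize_walk[OF assms(5,6)] by (simp add: bij_betw_def)
    show "swapping_mapping \<Omega> F \<rho> sim SWAP X normalize_walk"
      unfolding swapping_mapping_def using walks normalize_walk_swaps by blast
    show "\<forall>\<tau>\<in>normalize_walk ` X. rev (W_upto fh \<tau>) \<in> Stab \<Omega> F \<rho> sim \<pi> \<and>
        (\<forall>f. fh = Some f \<longrightarrow> R_W F sim (rev (W_upto fh \<tau>)) = {f})"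
      using walks assms(6) normalize_walk_stable by blast
    show "\<forall>W. valid_set \<Omega> F \<rho> {\<tau> \<in> normalize_walk ` X. rev (W_upto fh \<tau>) = W}"
      using valid_set_normalize_walk_fibre[OF assms(5,6)] by blast
  qed
qed

end
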